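(* Assume the Construction below and set $X=\bigcap_{n\geq0}X_n$. Then $X$ is a polynomially convex horizontal subset of $D(0,1/2)\times\mathbb{D}$, and $X\cap\big(D(0,1/5)\times\mathbb{D}\big)$ does not contain any holomorphic disk.
   Context: Notation: $D(a,r)$ is the open disk of center $a$ and radius $r$ in $\mathbb{C}$, $\mathbb{D}=D(0,1)$, and $\mathbb{Z}^2$ is identified with the Gaussian integers $\mathbb{Z}+i\mathbb{Z}\subset\mathbb{C}$. A subset of $D(0,1/2)\times\mathbb{D}$ is called horizontal if it is contained in $D(0,1/2)\times D(0,1-\varepsilon)$ for some $\varepsilon>0$. Construction. Let $(a_n)_{n\geq1}$ be a sequence of points of $D(0,1/4)$ such that both subsequences $(a_{2p})$ and $(a_{2p+1})$ are dense in $D(0,1/4)$. Put $A_n(z,w)=z-a_n$ if $n$ is odd and $A_n(z,w)=z+\frac{w}{100}-a_n$ if $n$ is even. Let $(r_n)_{n\geq1}$ be a sequence of positive reals decreasing to $0$ with $r_n\leq 1/10$, and $(m_n)_{n\geq1}$ a sequence of positive integers. Define $\delta_0=1/2$, $\delta_{n+1}=\frac{\delta_n^2 r_{n+1}}{4m_{n+1}^2}$ and $\varepsilon_{n+1}=\frac{\delta_n^2}{2m_{n+1}^2}$. Put $\Sigma_{n+1}=\overline{D}\big(0,\delta_n(1-\frac1{m_{n+1}})\big)\cap\frac{3\delta_n}{m_{n+1}}\mathbb{Z}^2$ (a finite set). Let $\mathcal S_0=\{0\}$, $P_{0,0}(z,w)=w$, and inductively $\mathcal S_{n+1}=\mathcal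 S_n\times\Sigma_{n+1}$ and, for $s'=(s,\sigma)\in\mathcal S_{n+1}$, $P_{n+1,s'}=(P_{n,s}-\sigma)^2-\varepsilon_{n+1}A_{n+1}$. Set (all sets taken in $D(0,1/2)\times\mathbb{D}$) $X_{n,s}=\{|P_{n,s}|<\delta_n\}$, $X_n=\bigcup_{s\in\mathcal S_n}X_{n,s}$, and $X^{\mathrm{int}}_{n+1,s,\sigma}=\{|P_{n,s}-\sigma|<\delta_n/m_{n+1}\}$ for $s\in\mathcal S_n,\sigma\in\Sigma_{n+1}$. *)

theory Defs
  imports "HOL-Analysis.Analysis"
begin

definition poly2 :: "(complex \<times> complex \<Rightarrow> complex) \<Rightarrow> bool" where
  "poly2 f \<longleftrightarrow> (\<exists>N::nat. \<exists>c::nat \<Rightarrow> nat \<Rightarrow> complex.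
      \<forall>z w. f (z, w) = (\<Sum>i\<le>N. \<Sum>j\<le>N. c i j * z ^ i * w ^ j))"

definition poly_hull :: "(complex \<times> complex) set \<Rightarrow> (complex \<times> complex) set" where
  "poly_hull K = (if K = {} then {} else
     {p. \<forall>f. poly2 f \<longrightarrow> norm (f p) \<le> (SUP q\<in>K. norm (f q))})"

definition poly_convex :: "(complex \<times> complex) set \<Rightarrow> bool" where
  "poly_convex X \<longleftrightarrow> (\<forall>K. compact K \<and> K \<subseteq> X \<longrightarrow> poly_hull K \<subseteq> X)"

definition Bidisk :: "(complex \<times> complex) set" where
  "Bidisk = {(z, w). norm z < 1/2 \<and> norm w < 1}"

definition horizontal :: "(complex \<times> complex) set \<Rightarrow> bool" where
  "horizontal Y \<longleftrightarrow> Y \<subseteq> Bidisk \<and>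
     (\<exists>e>0. Y \<subseteq> {(z, w). norm z < 1/2 \<and> norm w < 1 - e})"

definition contains_holo_disk :: "(complex \<times> complex) set \<Rightarrow> bool" where
  "contains_holo_disk Y \<longleftrightarrow> (\<exists>f g. f holomorphic_on ball 0 1 \<and> g holomorphic_on ball 0 1 \<and>
     (\<forall>t\<in>ball 0 1. (f t, g t) \<in> Y) \<and>
     (\<exists>t1\<in>ball 0 1. \<exists>t2\<in>ball 0 1. (f t1, g t1) \<noteq> (f t2, g t2)))"

definition Afun :: "(nat \<Rightarrow> complex) \<Rightarrow> nat \<Rightarrow> complex \<times> complex \<Rightarrow> complex" where
  "Afun a n p = (if odd n then fst p - a n else fst p + snd p / 100 - a n)"

fun delta :: "(nat \<Rightarrow> real) \<Rightarrow> (nat \<Rightarrow> nat) \<Rightarrow> nat \<Rightarrow> real" where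
  "delta r m 0 = 1/2"
| "delta r m (Suc n) = (delta r m n)^2 * r (Suc n) / (4 * (real (m (Suc n)))^2)"

definition eps :: "(nat \<Rightarrow> real) \<Rightarrow> (nat \<Rightarrow> nat) \<Rightarrow> nat \<Rightarrow> real" where
  "eps r m n = (delta r m (n - 1))^2 / (2 * (real (m n))^2)"
  \<comment> \<open>only used for n \<ge> 1: eps (n+1) = delta n ^2 / (2 m(n+1)^2)\<close>

text \<open>Sigma_{n} for n \<ge> 1 (the paper's Sigma_{n+1} is Sigma r m (n+1)).\<close>
definition Sigma_set :: "(nat \<Rightarrow> real) \<Rightarrow> (nat \<Rightarrow> nat) \<Rightarrow> nat \<Rightarrow> complex set" where
  "Sigma_set r m n = {\<sigma>. norm \<sigma> \<le> delta r m (n - 1) * (1 - 1 / real (m n)) \<and>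
      (\<exists>k l :: int. \<sigma> = complex_of_real (3 * delta r m (n - 1) / real (m n)) * Complex (of_int k) (of_int l))}"

text \<open>An element s of S_n is encoded as a function with s k \<in> Sigma_k for 1 \<le> k \<le> n
  (values outside {1..n} are irrelevant).\<close>
definition S_set :: "(nat \<Rightarrow> real) \<Rightarrow> (nat \<Rightarrow> nat) \<Rightarrow> nat \<Rightarrow> (nat \<Rightarrow> complex) set" where
  "S_set r m n = {s. \<forall>k\<in>{1..n}. s k \<in> Sigma_set r m k}"

fun Ppoly :: "(nat \<Rightarrow> complex) \<Rightarrow> (nat \<Rightarrow> real) \<Rightarrow> (nat \<Rightarrow> nat) \<Rightarrow> nat \<Rightarrow> (nat \<Rightarrow> complex)
    \<Rightarrow> complex \<times> complex \<Rightarrow> complex" where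
  "Ppoly a r m 0 s p = snd p"
| "Ppoly a r m (Suc n) s p =
     (Ppoly a r m n s p - s (Suc n))^2 - complex_of_real (eps r m (Suc n)) * Afun a (Suc n) p"

definition Xns :: "(nat \<Rightarrow> complex) \<Rightarrow> (nat \<Rightarrow> real) \<Rightarrow> (nat \<Rightarrow> nat) \<Rightarrow> nat \<Rightarrow> (nat \<Rightarrow> complex)
    \<Rightarrow> (complex \<times> complex) set" where
  "Xns a r m n s = {p \<in> Bidisk. norm (Ppoly a r m n s p) < delta r m n}"

definition Xn :: "(nat \<Rightarrow> complex) \<Rightarrow> (nat \<Rightarrow> real) \<Rightarrow> (nat \<Rightarrow> nat) \<Rightarrow> nat
    \<Rightarrow> (complex \<times> complex) set" where
  "Xn a r m n = (\<Union>s\<in>S_set r m n. Xns a r m n s)"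

definition Xlim :: "(nat \<Rightarrow> complex) \<Rightarrow> (nat \<Rightarrow> real) \<Rightarrow> (nat \<Rightarrow> nat) \<Rightarrow> (complex \<times> complex) set" where
  "Xlim a r m = (\<Inter>n. Xn a r m n)"

end

theory Submission
  imports Defs
begin

text \<open>
  Horizontality is immediate from X \<subseteq> X_0 = {|w| < 1/2}.  Each X_n is a disjoint union of
  "branches" X_{n,s} = {|P_{n,s}| < \<delta>_n}, and every branch of level n+1 lies in a unique branch
  of level n; the points of Sigma_{n+1} form a square lattice whose spacing is three times the
  radius gap_n = \<delta>_n/m_{n+1} of the disks {|P_{n,s} - \<sigma>| < gap_n} containing the sub-branches.

  Polynomial convexity: for compact K \<subseteq> X and p in the polynomial hull of K one proves
  p \<in> X_n by induction on n.  If p \<in> X_{n,s} but p \<notin> X_{n+1}, we build a polynomial G that is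
  large at p and small on K \<inter> X_{n,s}, and multiply it by a polynomial that is close to the
  indicator of X_{n,s} on K \<union> {p}; the product contradicts the defining inequality of the hull.
  All these polynomials are one-variable polynomials composed with P_{n,s}; they approximate,
  on neighbourhoods of a square lattice, resolvents 1/(\<zeta> - b) (Runge's pole pushing) and the
  indicator of a single lattice disk (via 1/(w^N + 1)).

  No holomorphic disk: a disk in X stays in a single branch at every level.  If the disk moves
  the function A_k (k odd: z, k even: z + w/100) at some point, we pick k with a_k close to that
  value and r_k small; on a small circle, P_{k-1,s} - \<sigma>_k is then a continuous square root of a
  function winding once around 0, which is impossible.  Otherwise both z and w are constant.
\<close>

section \<open>Polynomial expressions\<close>

inductive bpoly :: "(complex \<times> complex \<Rightarrow> complex) \<Rightarrow> bool" where
  bpoly_const: "bpoly (\<lambda>p. c)"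
| bpoly_fst: "bpoly fst"
| bpoly_snd: "bpoly snd"
| bpoly_add: "bpoly f \<Longrightarrow> bpoly g \<Longrightarrow> bpoly (\<lambda>p. f p + g p)"
| bpoly_mult: "bpoly f \<Longrightarrow> bpoly g \<Longrightarrow> bpoly (\<lambda>p. f p * g p)"

inductive upoly :: "(complex \<Rightarrow> complex) \<Rightarrow> bool" where
  upoly_const: "upoly (\<lambda>z. c)"
| upoly_id: "upoly (\<lambda>z. z)"
| upoly_add: "upoly f \<Longrightarrow> upoly g \<Longrightarrow> upoly (\<lambda>z. f z + g z)"
| upoly_mult: "upoly f \<Longrightarrow> upoly g \<Longrightarrow> upoly (\<lambda>z. f z * g z)"

lemma upoly_comp: "upoly q \<Longrightarrow> bpoly F \<Longrightarrow> bpoly (\<lambda>p. q (F p))"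
  by (induction rule: upoly.induct) (auto intro: bpoly.intros)

lemma bpoly_diff: "bpoly f \<Longrightarrow> bpoly g \<Longrightarrow> bpoly (\<lambda>p. f p - g p)"
proof -
  assume "bpoly f" "bpoly g"
  then have "bpoly (\<lambda>p. f p + (-1) * g p)" by (intro bpoly.intros)
  then show ?thesis by simp
qed

lemma bpoly_power: "bpoly f \<Longrightarrow> bpoly (\<lambda>p. f p ^ n)"
  by (induction n) (auto intro: bpoly.intros)

lemma upoly_cont: "upoly q \<Longrightarrow> continuous_on S q"
  by (induction rule: upoly.induct) (auto intro!: continuous_intros)

lemma bpoly_cont: "bpoly q \<Longrightarrow> continuous_on S q"
  by (induction rule: bpoly.induct) (auto intro!: continuous_intros)

text \<open>A function on C^2 is a monomial sum if it is a finite linear combination of monomials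
  z^i w^j; this is the bridge between the inductive description and the box-indexed sums
  used in the definition of poly2.\<close>
definition monomial_sum :: "(complex \<times> complex \<Rightarrow> complex) \<Rightarrow> bool" where
  "monomial_sum f \<longleftrightarrow> (\<exists>S c. finite S \<and> (\<forall>z w. f (z, w) = (\<Sum>x\<in>S. c x * z ^ fst x * w ^ snd x)))"

text \<open>Padding the coefficients with zeros turns a monomial sum into a box-indexed sum.\<close>
lemma monomial_sum_poly2: assumes "monomial_sum f" shows "poly2 f"
proof -
  obtain S c where S: "finite S" and f: "\<And>z w. f (z, w) = (\<Sum>x\<in>S. c x * z ^ fst x * w ^ snd x)"
    using assms by (auto simp: monomial_sum_def)
  define N where "N = Max (insert 0 (fst ` S \<union> snd ` S))"
  have sub: "S \<subseteq> {..N} \<times> {..N}"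
  proof
    fix x assume "x \<in> S"
    then have "fst x \<le> N" "snd x \<le> N" unfolding N_def using S by (auto intro!: Max_ge)
    then show "x \<in> {..N} \<times> {..N}" by (cases x) auto
  qed
  define c' where "c' i j = (if (i, j) \<in> S then c (i, j) else 0)" for i j
  have "\<forall>z w. f (z, w) = (\<Sum>i\<le>N. \<Sum>j\<le>N. c' i j * z ^ i * w ^ j)"
  proof (intro allI)
    fix z w
    have "(\<Sum>i\<le>N. \<Sum>j\<le>N. c' i j * z ^ i * w ^ j) = (\<Sum>x\<in>{..N} \<times> {..N}. c' (fst x) (snd x) * z ^ fst x * w ^ snd x)"
      by (simp add: sum.cartesian_product case_prod_beta)
    also have "\<dots> = (\<Sum>x\<in>S. c' (fst x) (snd x) * z ^ fst x * w ^ snd x)"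
      by (rule sum.mono_neutral_right) (use sub in \<open>auto simp: c'_def\<close>)
    also have "\<dots> = (\<Sum>x\<in>S. c x * z ^ fst x * w ^ snd x)"
      by (rule sum.cong) (auto simp: c'_def)
    finally show "f (z, w) = (\<Sum>i\<le>N. \<Sum>j\<le>N. c' i j * z ^ i * w ^ j)" using f by simp
  qed
  then show ?thesis unfolding poly2_def by blast
qed

lemma monomial_sum_const: "monomial_sum (\<lambda>p. k)"
  unfolding monomial_sum_def by (rule exI[of _ "{(0,0)}"], rule exI[of _ "\<lambda>x. k"]) simp

lemma monomial_sum_fst: "monomial_sum fst"
  unfolding monomial_sum_def by (rule exI[of _ "{(1,0)}"], rule exI[of _ "\<lambda>x. 1"]) simp

lemma monomial_sum_snd: "monomial_sum snd"
  unfolding monomial_sum_def by (rule exI[of _ "{(0,1)}"], rule exI[of _ "\<lambda>x. 1"]) simp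

lemma monomial_sum_add: assumes "monomial_sum f" "monomial_sum g" shows "monomial_sum (\<lambda>p. f p + g p)"
proof -
  obtain S c where S: "finite S" and f: "\<And>z w. f (z, w) = (\<Sum>x\<in>S. c x * z ^ fst x * w ^ snd x)"
    using assms(1) by (auto simp: monomial_sum_def)
  obtain T d where T: "finite T" and g: "\<And>z w. g (z, w) = (\<Sum>x\<in>T. d x * z ^ fst x * w ^ snd x)"
    using assms(2) by (auto simp: monomial_sum_def)
  define e where "e x = (if x \<in> S then c x else 0) + (if x \<in> T then d x else 0)" for x
  have "f (z, w) + g (z, w) = (\<Sum>x\<in>S \<union> T. e x * z ^ fst x * w ^ snd x)" for z w
  proof -
    have 1: "(\<Sum>x\<in>S. c x * z ^ fst x * w ^ snd x) = (\<Sum>x\<in>S \<union> T. (if x \<in> S then c x else 0) * z ^ fst x * w ^ snd x)"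
      by (rule sum.mono_neutral_cong_left) (use S T in auto)
    have 2: "(\<Sum>x\<in>T. d x * z ^ fst x * w ^ snd x) = (\<Sum>x\<in>S \<union> T. (if x \<in> T then d x else 0) * z ^ fst x * w ^ snd x)"
      by (rule sum.mono_neutral_cong_left) (use S T in auto)
    show ?thesis unfolding f g 1 2 by (simp add: e_def sum.distrib[symmetric] algebra_simps)
  qed
  then show ?thesis unfolding monomial_sum_def using S T by (intro exI[of _ "S \<union> T"] exI[of _ e]) auto
qed

lemma monomial_sum_mult: assumes "monomial_sum f" "monomial_sum g" shows "monomial_sum (\<lambda>p. f p * g p)"
proof -
  obtain S c where S: "finite S" and f: "\<And>z w. f (z, w) = (\<Sum>x\<in>S. c x * z ^ fst x * w ^ snd x)"
    using assms(1) by (auto simp: monomial_sum_def)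
  obtain T d where T: "finite T" and g: "\<And>z w. g (z, w) = (\<Sum>x\<in>T. d x * z ^ fst x * w ^ snd x)"
    using assms(2) by (auto simp: monomial_sum_def)
  define \<phi> :: "(nat \<times> nat) \<times> (nat \<times> nat) \<Rightarrow> nat \<times> nat" where
    "\<phi> q = (fst (fst q) + fst (snd q), snd (fst q) + snd (snd q))" for q
  define ee where "ee q = c (fst q) * d (snd q)" for q
  define e where "e y = (\<Sum>q\<in>{q \<in> S \<times> T. \<phi> q = y}. ee q)" for y
  have fin: "finite (S \<times> T)" using S T by simp
  have "f (z, w) * g (z, w) = (\<Sum>y\<in>\<phi> ` (S \<times> T). e y * z ^ fst y * w ^ snd y)" for z w
  proof -
    have "f (z, w) * g (z, w) = (\<Sum>x\<in>S. \<Sum>y\<in>T. (c x * z ^ fst x * w ^ snd x) * (d y * z ^ fst y * w ^ snd y))"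
      unfolding f g by (simp add: sum_product)
    also have "\<dots> = (\<Sum>q\<in>S \<times> T. ee q * z ^ fst (\<phi> q) * w ^ snd (\<phi> q))"
      by (simp add: sum.cartesian_product ee_def \<phi>_def power_add algebra_simps case_prod_beta)
    also have "\<dots> = (\<Sum>y\<in>\<phi> ` (S \<times> T). \<Sum>q\<in>{q \<in> S \<times> T. \<phi> q = y}. ee q * z ^ fst (\<phi> q) * w ^ snd (\<phi> q))"
      by (rule sum.image_gen[OF fin])
    also have "\<dots> = (\<Sum>y\<in>\<phi> ` (S \<times> T). e y * z ^ fst y * w ^ snd y)"
    proof (rule sum.cong[OF refl])
      fix y assume "y \<in> \<phi> ` (S \<times> T)"
      have "(\<Sum>q\<in>{q \<in> S \<times> T. \<phi> q = y}. ee q * z ^ fst (\<phi> q) * w ^ snd (\<phi> q))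
          = (\<Sum>q\<in>{q \<in> S \<times> T. \<phi> q = y}. ee q * z ^ fst y * w ^ snd y)"
        by (rule sum.cong) auto
      also have "\<dots> = e y * z ^ fst y * w ^ snd y"
        by (simp add: e_def sum_distrib_right)
      finally show "(\<Sum>q\<in>{q \<in> S \<times> T. \<phi> q = y}. ee q * z ^ fst (\<phi> q) * w ^ snd (\<phi> q)) = e y * z ^ fst y * w ^ snd y" .
    qed
    finally show ?thesis .
  qed
  then show ?thesis unfolding monomial_sum_def using fin by (intro exI[of _ "\<phi> ` (S \<times> T)"] exI[of _ e]) auto
qed

lemma bpoly_monomial_sum: "bpoly f \<Longrightarrow> monomial_sum f"
  by (induction rule: bpoly.induct) (auto intro: monomial_sum_const monomial_sum_fst monomial_sum_snd monomial_sum_add monomial_sum_mult)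

lemma bpoly_poly2: "bpoly f \<Longrightarrow> poly2 f"
  using bpoly_monomial_sum monomial_sum_poly2 by blast

section \<open>Uniform polynomial approximation in one variable\<close>

definition poly_approx :: "complex set \<Rightarrow> (complex \<Rightarrow> complex) \<Rightarrow> bool" where
  "poly_approx L F \<longleftrightarrow> (\<forall>\<eta>>0. \<exists>q. upoly q \<and> (\<forall>\<zeta>\<in>L. cmod (F \<zeta> - q \<zeta>) \<le> \<eta>))"

lemma upoly_bounded:
  assumes "bounded L" "upoly q"
  shows "\<exists>B. \<forall>\<zeta>\<in>L. cmod (q \<zeta>) \<le> B"
proof -
  have "compact (closure L)" using assms(1) by (simp add: compact_closure)
  then have "compact (q ` closure L)" by (rule compact_continuous_image[OF upoly_cont[OF assms(2)]])
  then have "bounded (q ` closure L)" by (rule compact_imp_bounded)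
  then obtain B where "\<forall>x\<in>q ` closure L. norm x \<le> B" by (auto simp: bounded_iff)
  then show ?thesis using closure_subset by fastforce
qed

lemma poly_approx_upoly: "upoly q \<Longrightarrow> poly_approx L q"
  unfolding poly_approx_def by (intro allI impI exI[of _ q]) auto

lemma poly_approx_bounded:
  assumes "bounded L" "poly_approx L F"
  shows "\<exists>B\<ge>0. \<forall>\<zeta>\<in>L. cmod (F \<zeta>) \<le> B"
proof -
  obtain q where q: "upoly q" "\<forall>\<zeta>\<in>L. cmod (F \<zeta> - q \<zeta>) \<le> 1"
    using assms(2) unfolding poly_approx_def by (meson zero_less_one)
  obtain B where B: "\<forall>\<zeta>\<in>L. cmod (q \<zeta>) \<le> B" using upoly_bounded[OF assms(1) q(1)] by blast
  have "\<forall>\<zeta>\<in>L. cmod (F \<zeta>) \<le> \<bar>B\<bar> + 1"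
  proof
    fix \<zeta> assume z: "\<zeta> \<in> L"
    have "cmod (F \<zeta>) \<le> cmod (F \<zeta> - q \<zeta>) + cmod (q \<zeta>)" by (metis diff_add_cancel norm_triangle_ineq)
    then show "cmod (F \<zeta>) \<le> \<bar>B\<bar> + 1" using q(2) B z by fastforce
  qed
  then show ?thesis by (intro exI[of _ "\<bar>B\<bar> + 1"]) auto
qed

lemma poly_approx_add:
  assumes "poly_approx L F" "poly_approx L G"
  shows "poly_approx L (\<lambda>\<zeta>. F \<zeta> + G \<zeta>)"
  unfolding poly_approx_def
proof (intro allI impI)
  fix \<eta> :: real assume "\<eta> > 0"
  then obtain q where q: "upoly q" "\<forall>\<zeta>\<in>L. cmod (F \<zeta> - q \<zeta>) \<le> \<eta>/2"
    using assms(1) unfolding poly_approx_def by (meson half_gt_zero)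
  obtain q' where q': "upoly q'" "\<forall>\<zeta>\<in>L. cmod (G \<zeta> - q' \<zeta>) \<le> \<eta>/2"
    using assms(2) \<open>\<eta> > 0\<close> unfolding poly_approx_def by (meson half_gt_zero)
  have "\<forall>\<zeta>\<in>L. cmod (F \<zeta> + G \<zeta> - (q \<zeta> + q' \<zeta>)) \<le> \<eta>"
  proof
    fix \<zeta> assume z: "\<zeta> \<in> L"
    have "cmod (F \<zeta> + G \<zeta> - (q \<zeta> + q' \<zeta>)) \<le> cmod (F \<zeta> - q \<zeta>) + cmod (G \<zeta> - q' \<zeta>)"
      by (metis add_diff_add norm_triangle_ineq)
    then show "cmod (F \<zeta> + G \<zeta> - (q \<zeta> + q' \<zeta>)) \<le> \<eta>" using q(2) q'(2) z by fastforce
  qed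
  then show "\<exists>q. upoly q \<and> (\<forall>\<zeta>\<in>L. cmod (F \<zeta> + G \<zeta> - q \<zeta>) \<le> \<eta>)"
    using q(1) q'(1) by (intro exI[of _ "\<lambda>\<zeta>. q \<zeta> + q' \<zeta>"]) (auto intro: upoly_add)
qed

lemma poly_approx_mult:
  assumes L: "bounded L" and F: "poly_approx L F" and G: "poly_approx L G"
  shows "poly_approx L (\<lambda>\<zeta>. F \<zeta> * G \<zeta>)"
  unfolding poly_approx_def
proof (intro allI impI)
  fix \<eta> :: real assume eta: "\<eta> > 0"
  obtain BF where BF: "BF \<ge> 0" "\<forall>\<zeta>\<in>L. cmod (F \<zeta>) \<le> BF" using poly_approx_bounded[OF L F] by blast
  obtain BG where BG: "BG \<ge> 0" "\<forall>\<zeta>\<in>L. cmod (G \<zeta>) \<le> BG" using poly_approx_bounded[OF L G] by blast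
  define e1 where "e1 = min 1 (\<eta> / (2 * (BF + 1)))"
  define e2 where "e2 = \<eta> / (2 * (BG + 2))"
  have e1: "e1 > 0" using eta BF by (simp add: e1_def)
  have e2: "e2 > 0" using eta BG by (simp add: e2_def)
  obtain r where r: "upoly r" "\<forall>\<zeta>\<in>L. cmod (G \<zeta> - r \<zeta>) \<le> e1"
    using G e1 unfolding poly_approx_def by blast
  obtain q where q: "upoly q" "\<forall>\<zeta>\<in>L. cmod (F \<zeta> - q \<zeta>) \<le> e2"
    using F e2 unfolding poly_approx_def by blast
  have "\<forall>\<zeta>\<in>L. cmod (F \<zeta> * G \<zeta> - q \<zeta> * r \<zeta>) \<le> \<eta>"
  proof
    fix \<zeta> assume z: "\<zeta> \<in> L"
    have rb: "cmod (r \<zeta>) \<le> BG + 1"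
    proof -
      have "cmod (r \<zeta>) \<le> cmod (G \<zeta>) + cmod (G \<zeta> - r \<zeta>)"
        by (metis add.commute diff_add_cancel norm_minus_commute norm_triangle_ineq)
      then show ?thesis using BG r(2) z e1_def by fastforce
    qed
    have "F \<zeta> * G \<zeta> - q \<zeta> * r \<zeta> = F \<zeta> * (G \<zeta> - r \<zeta>) + r \<zeta> * (F \<zeta> - q \<zeta>)"
      by (simp add: algebra_simps)
    then have "cmod (F \<zeta> * G \<zeta> - q \<zeta> * r \<zeta>) \<le> cmod (F \<zeta>) * cmod (G \<zeta> - r \<zeta>) + cmod (r \<zeta>) * cmod (F \<zeta> - q \<zeta>)"
      by (metis norm_mult norm_triangle_ineq)
    also have "\<dots> \<le> BF * e1 + (BG + 1) * e2"
      using BF BG r(2) q(2) z rb by (intro add_mono mult_mono) auto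
    also have "BF * e1 \<le> \<eta> / 2"
    proof -
      have "BF * e1 \<le> BF * (\<eta> / (2 * (BF + 1)))" using BF(1) by (intro mult_left_mono) (auto simp: e1_def)
      also have "\<dots> \<le> \<eta> / 2" using BF(1) eta by (simp add: field_simps)
      finally show ?thesis .
    qed
    also have "(BG + 1) * e2 \<le> \<eta> / 2" using BG(1) eta by (simp add: e2_def field_simps)
    finally show "cmod (F \<zeta> * G \<zeta> - q \<zeta> * r \<zeta>) \<le> \<eta>" by simp
  qed
  then show "\<exists>q. upoly q \<and> (\<forall>\<zeta>\<in>L. cmod (F \<zeta> * G \<zeta> - q \<zeta>) \<le> \<eta>)"
    using q(1) r(1) by (intro exI[of _ "\<lambda>\<zeta>. q \<zeta> * r \<zeta>"]) (auto intro: upoly_mult)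
qed

lemma poly_approx_const: "poly_approx L (\<lambda>\<zeta>. c)"
  by (rule poly_approx_upoly) (rule upoly_const)

lemma poly_approx_power: "bounded L \<Longrightarrow> poly_approx L F \<Longrightarrow> poly_approx L (\<lambda>\<zeta>. F \<zeta> ^ n)"
proof (induction n)
  case 0 then show ?case using poly_approx_const[of L 1] by simp
next
  case (Suc n)
  then show ?case using poly_approx_mult[OF Suc.prems(1) Suc.prems(2) Suc.IH[OF Suc.prems]] by simp
qed

lemma poly_approx_sum:
  assumes "bounded L" "\<And>k. k < (n::nat) \<Longrightarrow> poly_approx L (F k)"
  shows "poly_approx L (\<lambda>\<zeta>. \<Sum>k<n. F k \<zeta>)"
  using assms(2)
proof (induction n)
  case 0 then show ?case using poly_approx_const[of L 0] by simp
next
  case (Suc n)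
  then have "poly_approx L (\<lambda>\<zeta>. (\<Sum>k<n. F k \<zeta>) + F n \<zeta>)" by (intro poly_approx_add) auto
  then show ?case by simp
qed

lemma poly_approx_lim:
  assumes "\<And>\<eta>. \<eta> > 0 \<Longrightarrow> \<exists>G. poly_approx L G \<and> (\<forall>\<zeta>\<in>L. cmod (F \<zeta> - G \<zeta>) \<le> \<eta>)"
  shows "poly_approx L F"
  unfolding poly_approx_def
proof (intro allI impI)
  fix \<eta> :: real assume eta: "\<eta> > 0"
  obtain G where G: "poly_approx L G" "\<forall>\<zeta>\<in>L. cmod (F \<zeta> - G \<zeta>) \<le> \<eta>/2" using assms[of "\<eta>/2"] eta by auto
  obtain q where q: "upoly q" "\<forall>\<zeta>\<in>L. cmod (G \<zeta> - q \<zeta>) \<le> \<eta>/2"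
    using G(1) eta unfolding poly_approx_def by (meson half_gt_zero)
  have "\<forall>\<zeta>\<in>L. cmod (F \<zeta> - q \<zeta>) \<le> \<eta>"
  proof
    fix \<zeta> assume z: "\<zeta> \<in> L"
    have "cmod (F \<zeta> - q \<zeta>) \<le> cmod (F \<zeta> - G \<zeta>) + cmod (G \<zeta> - q \<zeta>)" by (rule norm_diff_triangle_le) auto
    then show "cmod (F \<zeta> - q \<zeta>) \<le> \<eta>" using G(2) q(2) z by fastforce
  qed
  then show "\<exists>q. upoly q \<and> (\<forall>\<zeta>\<in>L. cmod (F \<zeta> - q \<zeta>) \<le> \<eta>)" using q(1) by blast
qed

lemma poly_approx_cong: "poly_approx L F \<Longrightarrow> (\<And>\<zeta>. \<zeta> \<in> L \<Longrightarrow> F \<zeta> = G \<zeta>) \<Longrightarrow> poly_approx L G"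
  unfolding poly_approx_def by simp

text \<open>Geometric series: if Y is approximable and |Y| \<le> 1/2 on L, so is 1/(1 - Y).\<close>
lemma poly_approx_geometric:
  assumes L: "bounded L" and Y: "poly_approx L Y" and Y_le: "\<forall>\<zeta>\<in>L. cmod (Y \<zeta>) \<le> 1/2"
  shows "poly_approx L (\<lambda>\<zeta>. 1 / (1 - Y \<zeta>))"
proof (rule poly_approx_lim)
  fix \<eta> :: real assume \<eta>: "\<eta> > 0"
  obtain K :: nat where K: "(1/2::real)^K < \<eta>/2" using real_arch_pow_inv[of "\<eta>/2" "1/2::real"] \<eta> by auto
  have "poly_approx L (\<lambda>\<zeta>. \<Sum>k<K. Y \<zeta> ^ k)" by (intro poly_approx_sum poly_approx_power L Y)
  moreover have "cmod (1 / (1 - Y \<zeta>) - (\<Sum>k<K. Y \<zeta> ^ k)) \<le> \<eta>" if \<zeta>: "\<zeta> \<in> L" for \<zeta>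
  proof -
    have y: "cmod (Y \<zeta>) \<le> 1/2" using Y_le \<zeta> by blast
    then have "Y \<zeta> \<noteq> 1" by auto
    have den: "1/2 \<le> cmod (1 - Y \<zeta>)" using norm_triangle_ineq2[of 1 "Y \<zeta>"] y by simp
    have "1 / (1 - Y \<zeta>) - (\<Sum>k<K. Y \<zeta> ^ k) = Y \<zeta> ^ K / (1 - Y \<zeta>)"
      using \<open>Y \<zeta> \<noteq> 1\<close> by (simp add: sum_gp_strict field_simps)
    then have "cmod (1 / (1 - Y \<zeta>) - (\<Sum>k<K. Y \<zeta> ^ k)) = cmod (Y \<zeta>) ^ K / cmod (1 - Y \<zeta>)"
      by (simp add: norm_divide norm_power)
    also have "\<dots> \<le> (1/2)^K / (1/2)" using y den by (intro frac_le power_mono) auto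
    finally show ?thesis using K by simp
  qed
  ultimately show "\<exists>G. poly_approx L G \<and> (\<forall>\<zeta>\<in>L. cmod (1 / (1 - Y \<zeta>) - G \<zeta>) \<le> \<eta>)" by blast
qed

text \<open>A pole far from L: if |b| \<ge> 2 sup |L| + 1, then 1/(\<zeta> - b) = -(1/b) / (1 - \<zeta>/b) with
  |\<zeta>/b| \<le> 1/2 on L.\<close>
lemma poly_approx_far:
  assumes B: "B \<ge> 0" "\<forall>\<zeta>\<in>L. cmod \<zeta> \<le> B" and b: "cmod b \<ge> 2 * B + 1"
  shows "poly_approx L (\<lambda>\<zeta>. 1 / (\<zeta> - b))"
proof -
  have L: "bounded L" using B by (auto simp: bounded_iff)
  have b0: "cmod b > 0" using b B by linarith
  have "upoly (\<lambda>\<zeta>. \<zeta> / b)" using upoly_mult[OF upoly_id upoly_const[of "1/b"]] by simp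
  moreover have "\<forall>\<zeta>\<in>L. cmod (\<zeta> / b) \<le> 1/2"
  proof
    fix \<zeta> assume "\<zeta> \<in> L"
    then have "2 * cmod \<zeta> \<le> cmod b" using B b by fastforce
    then show "cmod (\<zeta> / b) \<le> 1/2" using b0 by (simp add: norm_divide field_simps)
  qed
  ultimately have "poly_approx L (\<lambda>\<zeta>. (- 1 / b) * (1 / (1 - \<zeta> / b)))"
    by (intro poly_approx_mult L poly_approx_const poly_approx_geometric poly_approx_upoly)
  then show ?thesis
  proof (rule poly_approx_cong)
    fix \<zeta> show "(- 1 / b) * (1 / (1 - \<zeta> / b)) = 1 / (\<zeta> - b)"
      using b0 by (cases "\<zeta> = b") (simp_all add: field_simps)
  qed
qed

text \<open>Moving a pole: if L stays at distance d from b' and |b - b'| \<le> d/2, then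
  1/(\<zeta> - b) = 1/(\<zeta> - b') \<cdot> 1/(1 - (b - b')/(\<zeta> - b')), so approximability passes from b' to b.\<close>
lemma poly_approx_step:
  assumes L: "bounded L" and d: "d > 0" and far: "\<forall>\<zeta>\<in>L. cmod (\<zeta> - b') \<ge> d"
    and bb: "cmod (b - b') \<le> d/2" and A: "poly_approx L (\<lambda>\<zeta>. 1/(\<zeta> - b'))"
  shows "poly_approx L (\<lambda>\<zeta>. 1/(\<zeta> - b))"
proof -
  have "\<forall>\<zeta>\<in>L. cmod ((b - b') * (1/(\<zeta> - b'))) \<le> 1/2"
  proof
    fix \<zeta> assume "\<zeta> \<in> L"
    then have "d \<le> cmod (\<zeta> - b')" using far by blast
    then have "cmod (b - b') / cmod (\<zeta> - b') \<le> (d/2) / d" using bb d by (intro frac_le) auto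
    then show "cmod ((b - b') * (1/(\<zeta> - b'))) \<le> 1/2" using d by (simp add: norm_mult norm_divide)
  qed
  then have "poly_approx L (\<lambda>\<zeta>. 1/(\<zeta> - b') * (1 / (1 - (b - b') * (1/(\<zeta> - b')))))"
    by (intro poly_approx_mult L A poly_approx_geometric poly_approx_const)
  then show ?thesis
  proof (rule poly_approx_cong)
    fix \<zeta> assume "\<zeta> \<in> L"
    then have "\<zeta> \<noteq> b'" using far d by force
    then show "1/(\<zeta> - b') * (1 / (1 - (b - b') * (1/(\<zeta> - b')))) = 1/(\<zeta> - b)"
      by (cases "\<zeta> = b") (simp_all add: field_simps)
  qed
qed

text \<open>Pole pushing along a segment: if the segment from x to y stays at distance d from L,
  approximability of the resolvent at y implies it at x (iterate the previous step).\<close>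
lemma poly_approx_segment:
  assumes L: "bounded L" and d: "d > 0"
    and seg: "\<forall>t\<in>{0..1::real}. \<forall>\<zeta>\<in>L. cmod (x + of_real t * (y - x) - \<zeta>) \<ge> d"
    and A: "poly_approx L (\<lambda>\<zeta>. 1/(\<zeta> - y))"
  shows "poly_approx L (\<lambda>\<zeta>. 1/(\<zeta> - x))"
proof -
  obtain M :: nat where M: "real M > 2 * cmod (y - x) / d" using reals_Archimedean2 by blast
  define M' where "M' = Suc M"
  have M'pos: "real M' > 0" by (simp add: M'_def)
  have Mb: "cmod (y - x) / real M' \<le> d/2"
  proof -
    have "2 * cmod (y - x) / d < real M'" using M by (simp add: M'_def)
    then have "2 * cmod (y - x) < real M' * d" using d by (simp add: field_simps)
    then show ?thesis using M'pos d by (simp add: field_simps)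
  qed
  define pt where "pt j = x + of_real (real j / real M') * (y - x)" for j :: nat
  have "j \<le> M' \<Longrightarrow> poly_approx L (\<lambda>\<zeta>. 1/(\<zeta> - pt (M' - j)))" for j
  proof (induction j)
    case 0
    have "pt M' = y" using M'pos by (simp add: pt_def)
    then show ?case using A by simp
  next
    case (Suc j)
    have jl: "j < M'" using Suc.prems by simp
    have IH: "poly_approx L (\<lambda>\<zeta>. 1/(\<zeta> - pt (M' - j)))" using Suc.IH Suc.prems by simp
    have t01: "real (M' - j) / real M' \<in> {0..1}" using jl M'pos by (auto simp: field_simps)
    have far: "\<forall>\<zeta>\<in>L. cmod (\<zeta> - pt (M' - j)) \<ge> d"
    proof
      fix \<zeta> assume "\<zeta> \<in> L"
      then have "d \<le> cmod (x + of_real (real (M'-j)/real M') * (y - x) - \<zeta>)" using seg t01 by blast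
      then show "cmod (\<zeta> - pt (M' - j)) \<ge> d" unfolding pt_def by (metis norm_minus_commute)
    qed
    have eq: "M' - j = Suc (M' - Suc j)" using jl by simp
    have "pt (M' - Suc j) - pt (M' - j) = - (of_real (1 / real M') * (y - x))"
    proof -
      have "complex_of_nat M' \<noteq> 0" using M'pos by simp
      then show ?thesis unfolding eq pt_def by (simp add: field_simps of_nat_Suc)
    qed
    then have "cmod (pt (M' - Suc j) - pt (M' - j)) = cmod (y - x) / real M'"
      using M'pos by (simp add: norm_mult norm_divide)
    then have "cmod (pt (M' - Suc j) - pt (M' - j)) \<le> d/2" using Mb by simp
    then show ?case using poly_approx_step[OF L d far _ IH] by blast
  qed
  from this[of M'] show ?thesis by (simp add: pt_def)
qed

section \<open>Square lattices\<close>

definition lattice :: "real \<Rightarrow> complex set" where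
  "lattice c = {\<zeta>. \<exists>k l :: int. \<zeta> = complex_of_real c * Complex (of_int k) (of_int l)}"

lemma int_sq_ge1: "(k::int) \<noteq> 0 \<Longrightarrow> (of_int k :: real)^2 \<ge> 1"
proof -
  assume "k \<noteq> 0"
  then have "\<bar>of_int k :: real\<bar> \<ge> 1" by linarith
  then show ?thesis
    by (metis abs_ge_self abs_of_nonneg one_le_power power2_abs zero_le_one order_trans)
qed

lemma lattice_sep:
  assumes "c > 0" "x \<in> lattice c" "y \<in> lattice c" "x \<noteq> y"
  shows "cmod (x - y) \<ge> c"
proof -
  obtain k l where x: "x = complex_of_real c * Complex (of_int k) (of_int l)"
    using assms(2) by (auto simp: lattice_def)
  obtain k' l' where y: "y = complex_of_real c * Complex (of_int k') (of_int l')"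
    using assms(3) by (auto simp: lattice_def)
  have d: "x - y = complex_of_real c * Complex (of_int (k - k')) (of_int (l - l'))"
    by (simp add: x y complex_eq_iff algebra_simps)
  have ne: "k - k' \<noteq> 0 \<or> l - l' \<noteq> 0" using assms(4) x y by auto
  have "1 \<le> (of_int (k-k') :: real)^2 + (of_int (l-l'))^2"
    using ne int_sq_ge1 by (metis add_increasing add_increasing2 zero_le_power2)
  then have "1 \<le> cmod (Complex (of_int (k - k')) (of_int (l - l')))"
    by (simp add: cmod_def)
  then show ?thesis using assms(1) by (simp add: d norm_mult)
qed

lemma lattice_zero: "0 \<in> lattice c"
  unfolding lattice_def by (rule CollectI, rule exI[of _ 0], rule exI[of _ 0]) (simp add: complex_eq_iff)

lemma lattice_diff: "x \<in> lattice c \<Longrightarrow> y \<in> lattice c \<Longrightarrow> x - y \<in> lattice c"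
  unfolding lattice_def
proof clarify
  fix k l k' l' :: int
  show "\<exists>k'' l''. complex_of_real c * Complex (of_int k) (of_int l) - complex_of_real c * Complex (of_int k') (of_int l')
     = complex_of_real c * Complex (of_int k'') (of_int l'')"
    by (rule exI[of _ "k - k'"], rule exI[of _ "l - l'"]) (simp add: complex_eq_iff algebra_simps)
qed

lemma lattice_ReIm: "x \<in> lattice c \<Longrightarrow> \<exists>k l::int. Re x = c * of_int k \<and> Im x = c * of_int l"
  unfolding lattice_def by auto

lemma scale_round: "\<bar>of_int k - x / (c::real)\<bar> \<le> 1/2 \<Longrightarrow> c > 0 \<Longrightarrow> \<bar>c * of_int k - x\<bar> \<le> c/2"
proof -
  assume h: "\<bar>of_int k - x / c\<bar> \<le> 1/2" and c: "c > 0"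
  have c0: "c \<noteq> 0" using c by simp
  have "c * of_int k - x = c * (of_int k - x / c)" using c0 by (simp add: right_diff_distrib)
  then have "\<bar>c * of_int k - x\<bar> = c * \<bar>of_int k - x / c\<bar>" using c by (simp add: abs_mult)
  also have "\<dots> \<le> c * (1/2)" using h c by (intro mult_left_mono) auto
  finally show ?thesis by simp
qed

lemma lattice_round:
  assumes "c > 0"
  shows "\<exists>\<tau>\<in>lattice c. \<bar>Re (b - \<tau>)\<bar> \<le> c/2 \<and> \<bar>Im (b - \<tau>)\<bar> \<le> c/2"
proof -
  define k where "k = round (Re b / c)"
  define l where "l = round (Im b / c)"
  define \<tau> where "\<tau> = complex_of_real c * Complex (of_int k) (of_int l)"
  have t: "\<tau> \<in> lattice c" unfolding lattice_def \<tau>_def by blast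
  have "\<bar>of_int k - Re b / c\<bar> \<le> 1/2" unfolding k_def by (rule of_int_round_abs_le)
  then have "\<bar>c * of_int k - Re b\<bar> \<le> c/2" using assms
    by (rule scale_round) 
  moreover have "\<bar>of_int l - Im b / c\<bar> \<le> 1/2" unfolding l_def by (rule of_int_round_abs_le)
  then have "\<bar>c * of_int l - Im b\<bar> \<le> c/2" using assms
    by (rule scale_round) 
  ultimately show ?thesis using t by (intro bexI[of _ \<tau>]) (auto simp: \<tau>_def abs_minus_commute)
qed

lemma coord_sq:
  assumes c: "(c::real) > 0" and x: "\<bar>x\<bar> \<le> c/2"
  shows "x^2 \<le> (x - c * of_int k)^2"
proof -
  have e: "(x - c * of_int k)^2 - x^2 = (c * of_int k) * (c * of_int k - 2 * x)"
    by (simp add: power2_eq_square algebra_simps)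
  have "(c * of_int k) * (c * of_int k - 2 * x) \<ge> 0"
  proof (cases "k > 0")
    case True
    then have "of_int k \<ge> (1::real)" by simp
    then have "c * of_int k \<ge> c" using mult_left_mono[of 1 "of_int k" c] c by simp
    moreover have "\<bar>x\<bar> \<ge> x" by simp
    ultimately have h2: "c * of_int k - 2 * x \<ge> 0" using x by linarith
    have h1: "c * of_int k \<ge> 0" using c \<open>c * of_int k \<ge> c\<close> by linarith
    show ?thesis by (rule mult_nonneg_nonneg[OF h1 h2])
  next
    case False
    show ?thesis
    proof (cases "k = 0")
      case True then show ?thesis by simp
    next
      case False
      with \<open>\<not> k > 0\<close> have "of_int k \<le> (-1::real)" by simp
      then have "c * of_int k \<le> -c" using mult_left_mono[of "of_int k" "-1" c] c by simp
      moreover have "\<bar>x\<bar> \<ge> -x" by simp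
      ultimately have h2: "c * of_int k - 2 * x \<le> 0" using x by linarith
      have h1: "c * of_int k \<le> 0" using c \<open>c * of_int k \<le> -c\<close> by linarith
      show ?thesis by (rule mult_nonpos_nonpos[OF h1 h2])
    qed
  qed
  then show ?thesis using e by linarith
qed

lemma voronoi:
  assumes c: "c > 0" and w: "\<bar>Re w\<bar> \<le> c/2" "\<bar>Im w\<bar> \<le> c/2" and s: "\<sigma> \<in> lattice c"
  shows "cmod w \<le> cmod (w - \<sigma>)"
proof -
  obtain k l where kl: "Re \<sigma> = c * of_int k" "Im \<sigma> = c * of_int l" using lattice_ReIm[OF s] by blast
  have "(Re w)^2 \<le> (Re w - c * of_int k)^2" by (rule coord_sq[OF c w(1)])
  moreover have "(Im w)^2 \<le> (Im w - c * of_int l)^2" by (rule coord_sq[OF c w(2)])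
  ultimately show ?thesis unfolding cmod_def using kl by (intro real_sqrt_le_mono) simp
qed

lemma nearest:
  assumes c: "c > 0"
  shows "\<exists>\<tau>0\<in>lattice c. \<bar>Re (b - \<tau>0)\<bar> \<le> c/2 \<and> \<bar>Im (b - \<tau>0)\<bar> \<le> c/2 \<and>
            (\<forall>\<sigma>\<in>lattice c. cmod (b - \<tau>0) \<le> cmod (b - \<sigma>))"
proof -
  obtain \<tau>0 where t: "\<tau>0 \<in> lattice c" "\<bar>Re (b - \<tau>0)\<bar> \<le> c/2" "\<bar>Im (b - \<tau>0)\<bar> \<le> c/2"
    using lattice_round[OF c] by blast
  have "\<forall>\<sigma>\<in>lattice c. cmod (b - \<tau>0) \<le> cmod (b - \<sigma>)"
  proof
    fix \<sigma> assume s: "\<sigma> \<in> lattice c"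
    have "cmod (b - \<tau>0) \<le> cmod ((b - \<tau>0) - (\<sigma> - \<tau>0))"
      by (rule voronoi[OF c t(2) t(3) lattice_diff[OF s t(1)]])
    then show "cmod (b - \<tau>0) \<le> cmod (b - \<sigma>)" by simp
  qed
  then show ?thesis using t by blast
qed

lemma half_int:
  assumes c: "(c::real) > 0" and s: "\<bar>s\<bar> = c/2"
  shows "\<bar>s + c * of_int j\<bar> \<ge> c/2"
proof (cases "j > 0")
  case True
  then have "of_int j \<ge> (1::real)" by simp
  then have "c * of_int j \<ge> c" using mult_left_mono[of 1 "of_int j" c] c by simp
  then show ?thesis using s by linarith
next
  case False
  show ?thesis
  proof (cases "j = 0")
    case True then show ?thesis using s by simp
  next
    case False
    with \<open>\<not> j > 0\<close> have "of_int j \<le> (-1::real)" by simp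
    then have "c * of_int j \<le> -c" using mult_left_mono[of "of_int j" "-1" c] c by simp
    then show ?thesis using s by linarith
  qed
qed

lemma midline_Re:
  assumes c: "c > 0" and t: "\<tau>0 \<in> lattice c" and x: "\<bar>Re (x - \<tau>0)\<bar> = c/2" and s: "\<sigma> \<in> lattice c"
  shows "cmod (x - \<sigma>) \<ge> c/2"
proof -
  obtain j l where jl: "Re (\<tau>0 - \<sigma>) = c * of_int j" using lattice_ReIm[OF lattice_diff[OF t s]] by blast
  have "Re (x - \<sigma>) = Re (x - \<tau>0) + c * of_int j" using jl unfolding minus_complex.sel by linarith
  then have "\<bar>Re (x - \<sigma>)\<bar> = \<bar>Re (x - \<tau>0) + c * of_int j\<bar>" by (simp only:)
  then have "\<bar>Re (x - \<sigma>)\<bar> \<ge> c/2" using half_int[OF c x, of j] by linarith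
  then show ?thesis using abs_Re_le_cmod[of "x - \<sigma>"] by linarith
qed

lemma midline_Im:
  assumes c: "c > 0" and t: "\<tau>0 \<in> lattice c" and x: "\<bar>Im (x - \<tau>0)\<bar> = c/2" and s: "\<sigma> \<in> lattice c"
  shows "cmod (x - \<sigma>) \<ge> c/2"
proof -
  obtain j where jl: "Im (\<tau>0 - \<sigma>) = c * of_int j" using lattice_ReIm[OF lattice_diff[OF t s]] by blast
  have "Im (x - \<sigma>) = Im (x - \<tau>0) + c * of_int j" using jl unfolding minus_complex.sel by linarith
  then have "\<bar>Im (x - \<sigma>)\<bar> = \<bar>Im (x - \<tau>0) + c * of_int j\<bar>" by (simp only:)
  then have "\<bar>Im (x - \<sigma>)\<bar> \<ge> c/2" using half_int[OF c x, of j] by linarith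
  then show ?thesis using abs_Im_le_cmod[of "x - \<sigma>"] by linarith
qed

lemma midline_dist:
  assumes c: "c > 0" and \<tau>0: "\<tau>0 \<in> lattice c" and \<sigma>: "\<sigma> \<in> lattice c"
    and mid: "\<bar>Re (x - \<tau>0)\<bar> = c/2 \<or> \<bar>Im (x - \<tau>0)\<bar> = c/2"
  shows "c/2 \<le> cmod (x - \<sigma>)"
  using mid midline_Re[OF c \<tau>0 _ \<sigma>] midline_Im[OF c \<tau>0 _ \<sigma>] by blast

lemma lattice_unique:
  assumes c: "c > 0" and \<tau>: "\<tau> \<in> lattice c" "\<tau>' \<in> lattice c"
    and x: "cmod (x - \<tau>) < c/2" "cmod (x - \<tau>') < c/2"
  shows "\<tau> = \<tau>'"
proof (rule ccontr)
  assume "\<tau> \<noteq> \<tau>'"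
  then have "c \<le> cmod (\<tau> - \<tau>')" using lattice_sep[OF c \<tau>] by simp
  also have "\<dots> \<le> cmod (x - \<tau>) + cmod (x - \<tau>')"
    using norm_diff_triangle_le[of \<tau> x "cmod (x - \<tau>)" \<tau>' "cmod (x - \<tau>')"] by (simp add: norm_minus_commute)
  finally show False using x by simp
qed
section \<open>Resolvents and indicators on neighbourhoods of a lattice\<close>

lemma lattice_pole_push:
  assumes L: "bounded L" "\<forall>\<zeta>\<in>L. \<exists>\<tau>\<in>lattice c. cmod (\<zeta> - \<tau>) \<le> R" and d: "d > 0"
    and seg: "\<forall>t\<in>{0..1::real}. \<forall>\<tau>\<in>lattice c. R + d \<le> cmod (x + of_real t * (y - x) - \<tau>)"
    and A: "poly_approx L (\<lambda>\<zeta>. 1/(\<zeta> - y))"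
  shows "poly_approx L (\<lambda>\<zeta>. 1/(\<zeta> - x))"
proof (rule poly_approx_segment[OF L(1) d _ A])
  show "\<forall>t\<in>{0..1}. \<forall>\<zeta>\<in>L. d \<le> cmod (x + of_real t * (y - x) - \<zeta>)"
  proof (intro ballI)
    fix t :: real and \<zeta> assume t: "t \<in> {0..1}" and z: "\<zeta> \<in> L"
    obtain \<tau> where \<tau>: "\<tau> \<in> lattice c" "cmod (\<zeta> - \<tau>) \<le> R" using L(2) z by blast
    have "cmod (x + of_real t * (y - x) - \<tau>) \<le> cmod (x + of_real t * (y - x) - \<zeta>) + cmod (\<zeta> - \<tau>)"
      by (rule norm_diff_triangle_le) auto
    then show "d \<le> cmod (x + of_real t * (y - x) - \<zeta>)" using seg t \<tau> by fastforce
  qed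
qed

lemma midline_escape:
  assumes c: "c > 0" and Rd: "R + d \<le> c/2" and d: "d > 0"
    and L: "bounded L" "\<forall>\<zeta>\<in>L. \<exists>\<tau>\<in>lattice c. cmod (\<zeta> - \<tau>) \<le> R"
    and \<tau>0: "\<tau>0 \<in> lattice c" and mid: "\<bar>Re (x - \<tau>0)\<bar> = c/2 \<or> \<bar>Im (x - \<tau>0)\<bar> = c/2"
  shows "poly_approx L (\<lambda>\<zeta>. 1/(\<zeta> - x))"
proof -
  obtain B0 where "\<forall>\<zeta>\<in>L. cmod \<zeta> \<le> B0" using L(1) by (auto simp: bounded_iff)
  then have B: "\<bar>B0\<bar> \<ge> 0" "\<forall>\<zeta>\<in>L. cmod \<zeta> \<le> \<bar>B0\<bar>" by force+
  define u where "u = (if \<bar>Re (x - \<tau>0)\<bar> = c/2 then \<i> else 1)"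
  define T where "T = 2 * \<bar>B0\<bar> + 1 + cmod x"
  define y where "y = x + of_real T * u"
  have "T \<ge> 0" by (simp add: T_def)
  have "cmod (of_real T * u) \<le> cmod y + cmod x"
    using norm_triangle_ineq4[of y x] by (simp add: y_def)
  moreover have "cmod (of_real T * u) = T" using \<open>T \<ge> 0\<close> by (simp add: u_def norm_mult)
  ultimately have "cmod y \<ge> 2 * \<bar>B0\<bar> + 1" unfolding T_def by linarith
  then have A: "poly_approx L (\<lambda>\<zeta>. 1/(\<zeta> - y))" by (rule poly_approx_far[OF B])
  have "\<forall>t\<in>{0..1::real}. \<forall>\<tau>\<in>lattice c. R + d \<le> cmod (x + of_real t * (y - x) - \<tau>)"
  proof (intro ballI)
    fix t :: real and \<tau> assume \<tau>: "\<tau> \<in> lattice c"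
    have "\<bar>Re (x + of_real t * (y - x) - \<tau>0)\<bar> = c/2 \<or> \<bar>Im (x + of_real t * (y - x) - \<tau>0)\<bar> = c/2"
    proof (cases "\<bar>Re (x - \<tau>0)\<bar> = c/2")
      case True then show ?thesis by (simp add: y_def u_def)
    next
      case False then show ?thesis using mid by (simp add: y_def u_def)
    qed
    then have "c/2 \<le> cmod (x + of_real t * (y - x) - \<tau>)" by (rule midline_dist[OF c \<tau>0 \<tau>])
    then show "R + d \<le> cmod (x + of_real t * (y - x) - \<tau>)" using Rd by linarith
  qed
  then show ?thesis by (rule lattice_pole_push[OF L d _ A])
qed

lemma cell_ray:
  assumes c: "c > 0" and \<tau>0: "\<tau>0 \<in> lattice c" and \<tau>: "\<tau> \<in> lattice c" and lam: "lam \<ge> 1"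
    and cell: "\<bar>Re (of_real lam * v)\<bar> \<le> c/2" "\<bar>Im (of_real lam * v)\<bar> \<le> c/2"
  shows "cmod v \<le> cmod (\<tau>0 + of_real lam * v - \<tau>)"
proof -
  have "cmod v \<le> cmod (of_real lam * v)" using lam by (simp add: norm_mult mult_le_cancel_right1)
  also have "\<dots> \<le> cmod (of_real lam * v - (\<tau> - \<tau>0))"
    by (rule voronoi[OF c cell lattice_diff[OF \<tau> \<tau>0]])
  finally show ?thesis by (simp add: algebra_simps)
qed

text \<open>The pole is pushed radially from the nearest lattice point to the
  boundary of its cell, and then to infinity along a midline.\<close>
lemma escape:
  assumes c: "c > 0" and R: "R \<ge> 0" and d: "d > 0" and Rd: "R + d \<le> c/2"
    and L: "bounded L" "\<forall>\<zeta>\<in>L. \<exists>\<tau>\<in>lattice c. cmod (\<zeta> - \<tau>) \<le> R"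
    and b: "\<forall>\<tau>\<in>lattice c. R + d \<le> cmod (b - \<tau>)"
  shows "poly_approx L (\<lambda>\<zeta>. 1/(\<zeta> - b))"
proof -
  obtain \<tau>0 where \<tau>0: "\<tau>0 \<in> lattice c" "\<bar>Re (b - \<tau>0)\<bar> \<le> c/2" "\<bar>Im (b - \<tau>0)\<bar> \<le> c/2"
    using nearest[OF c] by blast
  define v where "v = b - \<tau>0"
  define \<mu> where "\<mu> = max \<bar>Re v\<bar> \<bar>Im v\<bar>"
  have "R + d \<le> cmod v" using b \<tau>0(1) by (simp add: v_def)
  moreover have "cmod v \<le> 2 * \<mu>" using cmod_le[of v] by (simp add: \<mu>_def)
  ultimately have \<mu>0: "\<mu> > 0" using R d by linarith
  have \<mu>c: "\<mu> \<le> c/2" using \<tau>0 by (simp add: \<mu>_def v_def)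
  define lam1 where "lam1 = c / (2 * \<mu>)"
  have lam1: "lam1 \<ge> 1" "lam1 * \<mu> = c/2" using \<mu>0 \<mu>c by (simp_all add: lam1_def field_simps)
  have "\<bar>Re (\<tau>0 + of_real lam1 * v - \<tau>0)\<bar> = c/2 \<or> \<bar>Im (\<tau>0 + of_real lam1 * v - \<tau>0)\<bar> = c/2"
    using lam1 by (auto simp: abs_mult \<mu>_def max_def)
  then have A1: "poly_approx L (\<lambda>\<zeta>. 1/(\<zeta> - (\<tau>0 + of_real lam1 * v)))"
    by (rule midline_escape[OF c Rd d L \<tau>0(1)])
  have "\<forall>t\<in>{0..1::real}. \<forall>\<tau>\<in>lattice c. R + d \<le> cmod (b + of_real t * (\<tau>0 + of_real lam1 * v - b) - \<tau>)"
  proof (intro ballI)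
    fix t :: real and \<tau> assume t: "t \<in> {0..1}" and \<tau>: "\<tau> \<in> lattice c"
    define lam where "lam = 1 + t * (lam1 - 1)"
    have "t * (lam1 - 1) \<le> lam1 - 1" using t lam1 by (simp add: mult_left_le_one_le)
    then have lam: "1 \<le> lam" "lam \<le> lam1" using t lam1 by (auto simp: lam_def)
    have cell: "\<bar>Re (of_real lam * v)\<bar> \<le> c/2" "\<bar>Im (of_real lam * v)\<bar> \<le> c/2"
      using lam lam1 mult_mono[of lam lam1 _ \<mu>] by (auto simp: abs_mult \<mu>_def)
    have "b + of_real t * (\<tau>0 + of_real lam1 * v - b) = \<tau>0 + of_real lam * v"
      by (simp add: v_def lam_def algebra_simps)
    then show "R + d \<le> cmod (b + of_real t * (\<tau>0 + of_real lam1 * v - b) - \<tau>)"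
      using cell_ray[OF c \<tau>0(1) \<tau> lam(1) cell] \<open>R + d \<le> cmod v\<close> by simp
  qed
  then show ?thesis by (rule lattice_pole_push[OF L d _ A1])
qed

text \<open>Resolvents of w = (\<zeta> - \<tau>0)/(c/2) at points of the unit circle are approximable on L when
  R < c/2: the corresponding pole \<tau>0 + (c/2)\<alpha> keeps distance c/2 from the lattice.\<close>
lemma unit_circle_resolvent:
  assumes c: "c > 0" and R: "R \<ge> 0" "R < c/2"
    and L: "bounded L" "\<forall>\<zeta>\<in>L. \<exists>\<tau>\<in>lattice c. cmod (\<zeta> - \<tau>) \<le> R"
    and \<tau>0: "\<tau>0 \<in> lattice c" and \<alpha>: "cmod \<alpha> = 1"
  shows "poly_approx L (\<lambda>\<zeta>. 1 / ((\<zeta> - \<tau>0) / of_real (c/2) - \<alpha>))"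
proof -
  define b where "b = \<tau>0 + of_real (c/2) * \<alpha>"
  have b\<tau>0: "cmod (b - \<tau>0) = c/2" using \<alpha> c by (simp add: b_def norm_mult)
  have far: "\<forall>\<tau>\<in>lattice c. R + (c/2 - R) \<le> cmod (b - \<tau>)"
  proof
    fix \<tau> assume \<tau>: "\<tau> \<in> lattice c"
    show "R + (c/2 - R) \<le> cmod (b - \<tau>)"
    proof (cases "\<tau> = \<tau>0")
      case False
      have "c \<le> cmod (\<tau> - \<tau>0)" using lattice_sep[OF c \<tau> \<tau>0 False] .
      also have "\<dots> \<le> cmod (b - \<tau>) + cmod (b - \<tau>0)"
        using norm_diff_triangle_le[of \<tau> b "cmod (\<tau> - b)" \<tau>0 "cmod (b - \<tau>0)"]
        by (simp add: norm_minus_commute)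
      finally show ?thesis using b\<tau>0 by simp
    qed (use b\<tau>0 in simp)
  qed
  have "poly_approx L (\<lambda>\<zeta>. 1 / (\<zeta> - b))" by (rule escape[OF c R(1) _ _ L far]) (use R in auto)
  then have "poly_approx L (\<lambda>\<zeta>. of_real (c/2) * (1 / (\<zeta> - b)))" by (intro poly_approx_mult L poly_approx_const)
  moreover have "of_real (c/2) * (1 / (\<zeta> - b)) = 1 / ((\<zeta> - \<tau>0) / of_real (c/2) - \<alpha>)" for \<zeta>
    using c by (simp add: b_def field_simps)
  ultimately show ?thesis by simp
qed

text \<open>If all resolvents of w at the unit circle are approximable, so are those of w^(2^j):
  1/(w^2 - \<alpha>) is the product of the resolvents of w at the two square roots of \<alpha>.\<close>
lemma resolvent_power2:
  assumes L: "bounded L" and w: "\<And>\<alpha>. cmod \<alpha> = 1 \<Longrightarrow> poly_approx L (\<lambda>\<zeta>. 1 / (w \<zeta> - \<alpha>))"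
  shows "cmod \<alpha> = 1 \<Longrightarrow> poly_approx L (\<lambda>\<zeta>. 1 / (w \<zeta> ^ (2^j) - \<alpha>))"
proof (induction j arbitrary: \<alpha>)
  case 0 then show ?case using w by simp
next
  case (Suc j)
  define \<beta> where "\<beta> = csqrt \<alpha>"
  have "cmod \<beta> = 1" "cmod (-\<beta>) = 1" using Suc.prems by (auto simp: \<beta>_def)
  then have "poly_approx L (\<lambda>\<zeta>. 1 / (w \<zeta> ^ (2^j) - \<beta>) * (1 / (w \<zeta> ^ (2^j) - (-\<beta>))))"
    by (intro poly_approx_mult L Suc.IH)
  moreover have "1 / (w \<zeta> ^ (2^j) - \<beta>) * (1 / (w \<zeta> ^ (2^j) - (-\<beta>))) = 1 / (w \<zeta> ^ (2^Suc j) - \<alpha>)" for \<zeta>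
  proof -
    have "(w \<zeta> ^ (2^j) - \<beta>) * (w \<zeta> ^ (2^j) - (-\<beta>)) = (w \<zeta> ^ (2^j))^2 - \<beta>^2"
      by (simp add: power2_eq_square algebra_simps)
    also have "\<dots> = w \<zeta> ^ (2^Suc j) - \<alpha>" by (simp add: \<beta>_def power_mult[symmetric] mult.commute)
    finally have "(w \<zeta> ^ (2^j) - \<beta>) * (w \<zeta> ^ (2^j) - (-\<beta>)) = w \<zeta> ^ (2^Suc j) - \<alpha>" .
    moreover have "1 / (w \<zeta> ^ (2^j) - \<beta>) * (1 / (w \<zeta> ^ (2^j) - (-\<beta>)))
        = 1 / ((w \<zeta> ^ (2^j) - \<beta>) * (w \<zeta> ^ (2^j) - (-\<beta>)))"
      by (simp add: divide_inverse inverse_mult_distrib)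
    ultimately show ?thesis by simp
  qed
  ultimately show ?case by simp
qed

lemma power_indicator_estimate:
  assumes \<eta>: "\<eta> > 0"
  shows "\<exists>j. \<forall>y::complex. (cmod y \<le> 2/3 \<longrightarrow> cmod (1 / (y ^ (2^j) + 1) - 1) \<le> \<eta>)
                        \<and> (4/3 \<le> cmod y \<longrightarrow> cmod (1 / (y ^ (2^j) + 1)) \<le> \<eta>)"
proof -
  define e where "e = min (1/4) (\<eta>/2)"
  have e: "e > 0" "e \<le> 1/4" "e \<le> \<eta>/2" using \<eta> by (auto simp: e_def)
  obtain j where j: "(3/4::real)^j < e" using real_arch_pow_inv[of e "3/4::real"] e by auto
  define N where "N = (2::nat)^j"
  have "(3/4::real)^N \<le> (3/4)^j" unfolding N_def by (rule power_decreasing) (simp_all add: less_imp_le)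
  then have p34: "(3/4::real)^N \<le> e" using j by linarith
  have small: "cmod (1 / (y ^ N + 1) - 1) \<le> \<eta>" if y: "cmod y \<le> 2/3" for y :: complex
  proof -
    have "cmod (y ^ N) \<le> (2/3)^N" using power_mono[OF y] by (simp add: norm_power)
    also have "\<dots> \<le> (3/4)^N" by (rule power_mono) auto
    finally have yN: "cmod (y ^ N) \<le> e" using p34 by linarith
    have den: "3/4 \<le> cmod (y ^ N + 1)"
      using norm_triangle_ineq4[of "y ^ N + 1" "y ^ N"] yN e by simp
    have "y ^ N + 1 \<noteq> 0" using den by auto
    then have "1 / (y ^ N + 1) - 1 = - (y ^ N) / (y ^ N + 1)" by (simp add: field_simps)
    then have "cmod (1 / (y ^ N + 1) - 1) = cmod (y ^ N) / cmod (y ^ N + 1)" by (simp add: norm_divide)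
    also have "\<dots> \<le> e / (3/4)" using yN den e by (intro frac_le) auto
    also have "\<dots> \<le> \<eta>" using e by simp
    finally show ?thesis .
  qed
  have large: "cmod (1 / (y ^ N + 1)) \<le> \<eta>" if y: "4/3 \<le> cmod y" for y :: complex
  proof -
    have "1/e \<le> 1 / (3/4)^N" using p34 e by (simp add: frac_le)
    also have "\<dots> = (4/3)^N" by (simp add: power_divide)
    also have "\<dots> \<le> cmod (y ^ N)" using power_mono[OF y] by (simp add: norm_power)
    finally have yN: "1/e \<le> cmod (y ^ N)" .
    have "cmod (y ^ N) - 1 \<le> cmod (y ^ N + 1)" using norm_triangle_ineq2[of "y ^ N" "-1"] by simp
    moreover have "1/(2*e) \<le> 1/e - 1" using e by (simp add: field_simps)
    ultimately have den: "1/(2*e) \<le> cmod (y ^ N + 1)" using yN by linarith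
    have pos: "0 < 1/(2*e)" using e by simp
    then have "0 < cmod (y ^ N + 1)" using den by linarith
    then have prod_pos: "0 < cmod (y ^ N + 1) / (2 * e)" using e by simp
    have "cmod (1 / (y ^ N + 1)) \<le> 1 / (1/(2*e))"
      unfolding norm_divide norm_one using den pos prod_pos by (intro divide_left_mono) auto
    then show ?thesis using e by simp
  qed
  show ?thesis using small large unfolding N_def by blast
qed

text \<open>The approximant is 1/(w^N + 1) with w = (\<zeta> - \<tau>0)/(c/2).\<close>
lemma indicator_approx:
  assumes c: "c > 0" and R: "R \<ge> 0" "R < c/3"
    and L: "bounded L" "\<forall>\<zeta>\<in>L. \<exists>\<tau>\<in>lattice c. cmod (\<zeta> - \<tau>) \<le> R"
    and \<tau>0: "\<tau>0 \<in> lattice c" and \<eta>: "\<eta> > 0"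
  shows "\<exists>q. upoly q \<and> (\<forall>\<zeta>\<in>L. cmod (\<zeta> - \<tau>0) \<le> R \<longrightarrow> cmod (q \<zeta> - 1) \<le> \<eta>)
              \<and> (\<forall>\<zeta>\<in>L. R < cmod (\<zeta> - \<tau>0) \<longrightarrow> cmod (q \<zeta>) \<le> \<eta>)"
proof -
  define w where "w \<zeta> = (\<zeta> - \<tau>0) / of_real (c/2)" for \<zeta>
  have norm_w: "cmod (w \<zeta>) = cmod (\<zeta> - \<tau>0) / (c/2)" for \<zeta>
    unfolding w_def norm_divide norm_of_real using c by simp
  obtain j where j: "\<forall>y::complex. (cmod y \<le> 2/3 \<longrightarrow> cmod (1 / (y ^ (2^j) + 1) - 1) \<le> \<eta>/2)
                        \<and> (4/3 \<le> cmod y \<longrightarrow> cmod (1 / (y ^ (2^j) + 1)) \<le> \<eta>/2)"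
    using power_indicator_estimate[of "\<eta>/2"] \<eta> by auto
  have "poly_approx L (\<lambda>\<zeta>. 1 / (w \<zeta> ^ (2^j) - (-1)))"
    by (rule resolvent_power2[OF L(1)]) (use unit_circle_resolvent[OF c _ _ L \<tau>0] R in \<open>auto simp: w_def\<close>)
  then obtain q where q: "upoly q" "\<forall>\<zeta>\<in>L. cmod (1 / (w \<zeta> ^ (2^j) + 1) - q \<zeta>) \<le> \<eta>/2"
    using \<eta> unfolding poly_approx_def by (metis diff_minus_eq_add half_gt_zero)
  have "cmod (q \<zeta> - 1) \<le> \<eta>" if z: "\<zeta> \<in> L" "cmod (\<zeta> - \<tau>0) \<le> R" for \<zeta>
  proof -
    have "cmod (w \<zeta>) \<le> 2/3" using z R c by (simp add: norm_w field_simps)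
    then have "cmod (1 / (w \<zeta> ^ (2^j) + 1) - 1) \<le> \<eta>/2" using j by blast
    then show ?thesis using q(2) z(1) norm_diff_triangle_le[of "q \<zeta>" "1 / (w \<zeta> ^ (2^j) + 1)" _ 1]
      by (force simp: norm_minus_commute)
  qed
  moreover have "cmod (q \<zeta>) \<le> \<eta>" if z: "\<zeta> \<in> L" "R < cmod (\<zeta> - \<tau>0)" for \<zeta>
  proof -
    obtain \<tau> where \<tau>: "\<tau> \<in> lattice c" "cmod (\<zeta> - \<tau>) \<le> R" using L(2) z(1) by blast
    then have "c \<le> cmod (\<tau> - \<tau>0)" using lattice_sep[OF c \<tau>(1) \<tau>0] z(2) by fastforce
    also have "\<dots> \<le> cmod (\<zeta> - \<tau>) + cmod (\<zeta> - \<tau>0)"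
      using norm_diff_triangle_le[of \<tau> \<zeta> "cmod (\<zeta> - \<tau>)" \<tau>0] by (simp add: norm_minus_commute)
    finally have "4/3 \<le> cmod (w \<zeta>)" using \<tau>(2) R c by (simp add: norm_w field_simps)
    then have "cmod (1 / (w \<zeta> ^ (2^j) + 1)) \<le> \<eta>/2" using j by blast
    then show ?thesis using q(2) z(1) norm_triangle_ineq2[of "q \<zeta>" "1 / (w \<zeta> ^ (2^j) + 1)"]
      by (force simp: norm_minus_commute)
  qed
  ultimately show ?thesis using q(1) by blast
qed
section \<open>Compactness and polynomial hulls\<close>

lemma infdist_lessE:
  assumes "A \<noteq> {}" "infdist x A < e"
  obtains a where "a \<in> A" "dist x a < e"
proof -
  have "Inf ((\<lambda>a. dist x a) ` A) < e" using assms by (simp add: infdist_def)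
  then show ?thesis using cInf_lessD[of "(\<lambda>a. dist x a) ` A" e] assms(1) that by auto
qed

lemma sup_bound:
  assumes "compact K" "continuous_on K f"
  shows "\<exists>M\<ge>0. \<forall>q\<in>K. cmod (f q :: complex) \<le> M"
proof -
  have "bounded (f ` K)" using compact_imp_bounded[OF compact_continuous_image[OF assms(2) assms(1)]] .
  then obtain M where "\<forall>x\<in>f ` K. norm x \<le> M" by (auto simp: bounded_iff)
  then show ?thesis by (intro exI[of _ "\<bar>M\<bar>"]) auto
qed

lemma compact_sup_less:
  fixes f :: "'a::topological_space \<Rightarrow> real"
  assumes "compact A" "continuous_on A f" "\<forall>x\<in>A. f x < D"
  shows "\<exists>\<beta><D. \<forall>x\<in>A. f x \<le> \<beta>"
proof (cases "A = {}")
  case False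
  then obtain x0 where "x0 \<in> A" "\<forall>x\<in>A. f x \<le> f x0" using continuous_attains_sup[OF assms(1) _ assms(2)] by blast
  then show ?thesis using assms(3) by blast
qed (auto intro: exI[of _ "D - 1"])

lemma small_weight:
  fixes M D :: real
  assumes "0 \<le> M" "0 < D"
  obtains e where "0 < e" "e \<le> D" "e * M \<le> D"
proof (rule that[of "D / (M + 1)"])
  show "0 < D / (M + 1)" "D / (M + 1) \<le> D" using assms by (simp_all add: field_simps)
  have "D / (M + 1) * M \<le> D / (M + 1) * (M + 1)" using assms by (intro mult_left_mono) auto
  then show "D / (M + 1) * M \<le> D" using assms by simp
qed

lemma hull_le:
  assumes "p \<in> poly_hull K" "bpoly f" "\<forall>q\<in>K. cmod (f q) \<le> \<beta>"
  shows "cmod (f p) \<le> \<beta>"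
proof -
  have "K \<noteq> {}" using assms(1) by (auto simp: poly_hull_def)
  then have "cmod (f p) \<le> (SUP q\<in>K. cmod (f q))" using assms(1) bpoly_poly2[OF assms(2)] by (auto simp: poly_hull_def)
  also have "\<dots> \<le> \<beta>" using \<open>K \<noteq> {}\<close> assms(3) by (intro cSUP_least) auto
  finally show ?thesis .
qed

definition poly_separates :: "(complex \<times> complex) set \<Rightarrow> complex \<times> complex \<Rightarrow> bool" where
  "poly_separates A p \<longleftrightarrow> (\<exists>G \<gamma>. bpoly G \<and> 0 < \<gamma> \<and> \<gamma> \<le> cmod (G p) \<and> (\<forall>q\<in>A. cmod (G q) \<le> \<gamma>/2))"

lemma hull_localized_separation:
  assumes p: "p \<in> poly_hull K" and K: "compact K" and sep: "poly_separates (K \<inter> A) p"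
    and loc: "\<And>e. e > 0 \<Longrightarrow> \<exists>H. bpoly H \<and> cmod (H p - 1) \<le> e
                   \<and> (\<forall>q\<in>K \<inter> A. cmod (H q - 1) \<le> e) \<and> (\<forall>q\<in>K - A. cmod (H q) \<le> e)"
  shows False
proof -
  obtain G \<gamma> where G: "bpoly G" "0 < \<gamma>" "\<gamma> \<le> cmod (G p)" "\<forall>q\<in>K \<inter> A. cmod (G q) \<le> \<gamma>/2"
    using sep by (auto simp: poly_separates_def)
  obtain M where M: "M \<ge> 0" "\<forall>q\<in>K. cmod (G q) \<le> M" using sup_bound[OF K bpoly_cont[OF G(1)]] by blast
  obtain e where e0: "0 < e" "e \<le> min (1/4) (\<gamma>/2)" "e * M \<le> min (1/4) (\<gamma>/2)"
    using small_weight[OF M(1), of "min (1/4) (\<gamma>/2)"] G(2) by auto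
  then have e: "0 < e" "e \<le> 1/4" "e * M \<le> \<gamma>/2" by auto
  obtain H where H: "bpoly H" "cmod (H p - 1) \<le> e" "\<forall>q\<in>K \<inter> A. cmod (H q - 1) \<le> e"
      "\<forall>q\<in>K - A. cmod (H q) \<le> e" using loc[OF e(1)] by blast
  have "cmod (H q * G q) \<le> 5/8 * \<gamma>" if q: "q \<in> K" for q
  proof (cases "q \<in> A")
    case True
    then have "cmod (H q) \<le> 5/4" using H(3) q e norm_triangle_ineq2[of "H q" 1] by force
    then have "cmod (H q) * cmod (G q) \<le> 5/4 * (\<gamma>/2)" using G(4) q True by (intro mult_mono) auto
    then show ?thesis by (simp add: norm_mult)
  next
    case False
    then have "cmod (H q) * cmod (G q) \<le> e * M" using H(4) M q e by (intro mult_mono) auto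
    then show ?thesis using e G(2) by (simp add: norm_mult)
  qed
  then have "cmod (H p * G p) \<le> 5/8 * \<gamma>" by (intro hull_le[OF p bpoly_mult[OF H(1) G(1)]]) auto
  moreover have "3/4 \<le> cmod (H p)" using H(2) e norm_triangle_ineq3[of "H p" 1] by simp
  then have "3/4 * \<gamma> \<le> cmod (H p) * cmod (G p)" using G(2,3) by (intro mult_mono) auto
  ultimately show False using G(2) by (simp add: norm_mult)
qed

lemma product_indicator_bounds:
  fixes h g :: "'a \<Rightarrow> complex"
  assumes "A' \<subseteq> A" "0 \<le> e" "e \<le> \<eta>" "e * M \<le> \<eta>" "\<eta> \<le> 1"
    and h: "\<forall>q\<in>A. cmod (h q - 1) \<le> e" "\<forall>q\<in>K - A. cmod (h q) \<le> e"
    and g: "\<forall>q\<in>A'. cmod (g q - 1) \<le> \<eta>" "\<forall>q\<in>A - A'. cmod (g q) \<le> \<eta>" "\<forall>q\<in>K. cmod (g q) \<le> M"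
  shows "\<forall>q\<in>A'. cmod (h q * g q - 1) \<le> 3 * \<eta>" "\<forall>q\<in>K - A'. cmod (h q * g q) \<le> 2 * \<eta>"
proof -
  show "\<forall>q\<in>A'. cmod (h q * g q - 1) \<le> 3 * \<eta>"
  proof
    fix q assume q: "q \<in> A'"
    have hq: "cmod (h q - 1) \<le> \<eta>" using h(1) q assms(1,3) by force
    have gq: "cmod (g q - 1) \<le> \<eta>" using g(1) q by blast
    then have "cmod (g q) \<le> 2" using assms(5) norm_triangle_ineq2[of "g q" 1] by simp
    have "h q * g q - 1 = (h q - 1) * g q + (g q - 1)" by (simp add: algebra_simps)
    then have "cmod (h q * g q - 1) \<le> cmod (h q - 1) * cmod (g q) + cmod (g q - 1)"
      by (metis norm_mult norm_triangle_ineq)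
    also have "\<dots> \<le> \<eta> * 2 + \<eta>"
      using hq gq \<open>cmod (g q) \<le> 2\<close> assms(2,3) by (intro add_mono mult_mono) auto
    finally show "cmod (h q * g q - 1) \<le> 3 * \<eta>" by simp
  qed
  show "\<forall>q\<in>K - A'. cmod (h q * g q) \<le> 2 * \<eta>"
  proof
    fix q assume q: "q \<in> K - A'"
    show "cmod (h q * g q) \<le> 2 * \<eta>"
    proof (cases "q \<in> A")
      case True
      then have "cmod (h q) \<le> 2" using h(1) assms(3,5) norm_triangle_ineq2[of "h q" 1] by force
      then have "cmod (h q) * cmod (g q) \<le> 2 * \<eta>" using g(2) q True by (intro mult_mono) auto
      then show ?thesis by (simp add: norm_mult)
    next
      case False
      then have "cmod (h q) * cmod (g q) \<le> e * M" using h(2) g(3) q assms(2) by (intro mult_mono) auto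
      then show ?thesis unfolding norm_mult using assms(2,3,4) by linarith
    qed
  qed
qed

section \<open>The construction\<close>

lemma open_Bidisk: "open Bidisk"
proof -
  have "Bidisk = {p. cmod (fst p) < 1/2} \<inter> {p. cmod (snd p) < 1}" by (auto simp: Bidisk_def)
  moreover have "open {p::complex\<times>complex. cmod (fst p) < 1/2}"
    by (rule open_Collect_less) (auto intro!: continuous_intros)
  moreover have "open {p::complex\<times>complex. cmod (snd p) < 1}"
    by (rule open_Collect_less) (auto intro!: continuous_intros)
  ultimately show ?thesis by (metis open_Int)
qed

text \<open>The hypotheses of the construction used for polynomial convexity and horizontality; the
  density and limit hypotheses enter only in the absence of disks.\<close>
locale construction =
  fixes a :: "nat \<Rightarrow> complex" and r :: "nat \<Rightarrow> real" and m :: "nat \<Rightarrow> nat"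
  assumes a_in: "\<And>n. n \<ge> 1 \<Longrightarrow> a n \<in> ball 0 (1/4)"
    and r_pos: "\<And>n. n \<ge> 1 \<Longrightarrow> r n > 0"
    and r_le: "\<And>n. n \<ge> 1 \<Longrightarrow> r n \<le> 1/10"
    and m_pos: "\<And>n. n \<ge> 1 \<Longrightarrow> m n > 0"
begin

abbreviation "\<delta> \<equiv> delta r m"
abbreviation "\<epsilon> \<equiv> eps r m"
abbreviation "P \<equiv> Ppoly a r m"

lemma m_ge1: "real (m (Suc n)) \<ge> 1"
  using m_pos[of "Suc n"] by simp

lemma delta_pos: "\<delta> n > 0"
proof (induction n)
  case 0 then show ?case by simp
next
  case (Suc n)
  have "r (Suc n) > 0" using r_pos by simp
  moreover have "real (m (Suc n)) > 0" using m_ge1[of n] by simp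
  ultimately show ?case using Suc by simp
qed

lemma eps_Suc: "\<epsilon> (Suc n) = (\<delta> n)^2 / (2*(real (m (Suc n)))^2)"
  by (simp add: eps_def)

lemma eps_pos: "\<epsilon> (Suc n) > 0"
  using delta_pos[of n] m_ge1[of n] by (simp add: eps_Suc)

lemma delta_Suc_eps: "\<delta> (Suc n) = \<epsilon> (Suc n) * r (Suc n) / 2"
  by (simp add: eps_Suc field_simps power2_eq_square)

lemma eps_delta: "2 * \<epsilon> (Suc n) = (\<delta> n / real (m (Suc n)))^2"
  using m_ge1[of n] by (simp add: eps_Suc field_simps power2_eq_square)

lemma A_bound:
  assumes "p \<in> Bidisk" "n \<ge> 1"
  shows "cmod (Afun a n p) < 76/100"
proof -
  obtain z w where p: "p = (z, w)" by (cases p)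
  have z: "cmod z < 1/2" and w: "cmod w < 1" using assms(1) p by (auto simp: Bidisk_def)
  have an: "cmod (a n) < 1/4" using a_in[OF assms(2)] by simp
  have "cmod (z - a n) \<le> cmod z + cmod (a n)" by (rule norm_triangle_ineq4)
  moreover have "cmod (z + w/100 - a n) \<le> cmod z + cmod w / 100 + cmod (a n)"
  proof -
    have "cmod (z + w/100 - a n) \<le> cmod (z + w/100) + cmod (a n)" by (rule norm_triangle_ineq4)
    moreover have "cmod (z + w/100) \<le> cmod z + cmod (w/100)" by (rule norm_triangle_ineq)
    ultimately show ?thesis by simp
  qed
  ultimately show ?thesis using z w an by (auto simp: Afun_def p)
qed

lemma sigma_bound:
  "\<sigma> \<in> Sigma_set r m (Suc n) \<Longrightarrow> cmod \<sigma> \<le> \<delta> n * (1 - 1/real (m (Suc n)))"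
  by (simp add: Sigma_set_def)

text \<open>The key estimate: on X_{n+1,s}, |P_{n,s} - \<sigma>_{n+1}| < \<delta>_n/m_{n+1}, since
  (P_{n,s} - \<sigma>)^2 = P_{n+1,s} + \<epsilon>_{n+1} A_{n+1} and r_{n+1} \<le> 1/10.\<close>
lemma step_bound:
  assumes "p \<in> Bidisk" "cmod (P (Suc n) s p) < \<delta> (Suc n)"
  shows "cmod (P n s p - s (Suc n)) < \<delta> n / real (m (Suc n))"
proof -
  define v where "v = P n s p - s (Suc n)"
  have e: "v^2 = P (Suc n) s p + complex_of_real (\<epsilon> (Suc n)) * Afun a (Suc n) p"
    by (simp add: v_def)
  have ep: "\<epsilon> (Suc n) > 0" by (rule eps_pos)
  have A: "cmod (Afun a (Suc n) p) < 76/100" using A_bound[OF assms(1)] by simp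
  have "cmod (v^2) \<le> cmod (P (Suc n) s p) + \<epsilon> (Suc n) * cmod (Afun a (Suc n) p)"
    unfolding e using ep norm_triangle_ineq[of "P (Suc n) s p" "complex_of_real (\<epsilon> (Suc n)) * Afun a (Suc n) p"]
    by (simp add: norm_mult)
  also have "\<dots> < \<epsilon> (Suc n) * r (Suc n) / 2 + \<epsilon> (Suc n) * (76/100)"
  proof -
    have "cmod (P (Suc n) s p) < \<epsilon> (Suc n) * r (Suc n) / 2"
      using assms(2) delta_Suc_eps[of n] by linarith
    moreover have "\<epsilon> (Suc n) * cmod (Afun a (Suc n) p) \<le> \<epsilon> (Suc n) * (76/100)"
      using A ep by (intro mult_left_mono) auto
    ultimately show ?thesis by linarith
  qed
  also have "\<dots> \<le> \<epsilon> (Suc n) * (1/20) + \<epsilon> (Suc n) * (76/100)"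
    using r_le[of "Suc n"] ep by simp
  also have "\<dots> < 2 * \<epsilon> (Suc n)" using ep by simp
  also have "\<dots> = (\<delta> n / real (m (Suc n)))^2" by (rule eps_delta)
  finally have "(cmod v)^2 < (\<delta> n / real (m (Suc n)))^2" by (simp add: norm_power)
  then show ?thesis unfolding v_def[symmetric]
    using delta_pos[of n] m_ge1[of n] by (meson divide_nonneg_nonneg less_imp_le of_nat_0_le_iff power_less_imp_less_base)
qed

lemma S_set_Suc: "s \<in> S_set r m (Suc n) \<Longrightarrow> s \<in> S_set r m n \<and> s (Suc n) \<in> Sigma_set r m (Suc n)"
  by (auto simp: S_set_def)

lemma Xns_mono:
  assumes "s \<in> S_set r m (Suc n)"
  shows "Xns a r m (Suc n) s \<subseteq> Xns a r m n s"
proof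
  fix p assume p: "p \<in> Xns a r m (Suc n) s"
  then have pb: "p \<in> Bidisk" and pp: "cmod (P (Suc n) s p) < \<delta> (Suc n)" by (auto simp: Xns_def)
  have 1: "cmod (P n s p - s (Suc n)) < \<delta> n / real (m (Suc n))" by (rule step_bound[OF pb pp])
  have 2: "cmod (s (Suc n)) \<le> \<delta> n * (1 - 1/real (m (Suc n)))"
    using S_set_Suc[OF assms] sigma_bound by blast
  have "cmod (P n s p) \<le> cmod (P n s p - s (Suc n)) + cmod (s (Suc n))"
    by (metis diff_add_cancel norm_triangle_ineq)
  also have "\<dots> < \<delta> n / real (m (Suc n)) + \<delta> n * (1 - 1/real (m (Suc n)))"
    using 1 2 by simp
  also have "\<dots> = \<delta> n" by (simp add: field_simps)
  finally show "p \<in> Xns a r m n s" using pb by (simp add: Xns_def)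
qed

lemma Xn_mono_Suc: "Xn a r m (Suc n) \<subseteq> Xn a r m n"
  unfolding Xn_def using Xns_mono S_set_Suc by blast

lemma Ppoly_cong: "(\<forall>k\<in>{1..n}. s k = s' k) \<Longrightarrow> P n s = P n s'"
proof (induction n)
  case 0 show ?case by (rule ext) simp
next
  case (Suc n)
  then have "P n s = P n s'" by auto
  moreover have "s (Suc n) = s' (Suc n)" using Suc.prems by auto
  ultimately show ?case by (intro ext) simp
qed

lemma Xns_cong: "(\<forall>k\<in>{1..n}. s k = s' k) \<Longrightarrow> Xns a r m n s = Xns a r m n s'"
  unfolding Xns_def using Ppoly_cong by metis

lemma Sigma_lattice: "\<sigma> \<in> Sigma_set r m (Suc n) \<Longrightarrow> \<sigma> \<in> lattice (3 * \<delta> n / real (m (Suc n)))"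
  by (auto simp: Sigma_set_def lattice_def)

lemma Sigma_sep:
  assumes "\<sigma> \<in> Sigma_set r m (Suc n)" "\<sigma>' \<in> Sigma_set r m (Suc n)" "\<sigma> \<noteq> \<sigma>'"
  shows "cmod (\<sigma> - \<sigma>') \<ge> 3 * \<delta> n / real (m (Suc n))"
  using lattice_sep[OF _ Sigma_lattice[OF assms(1)] Sigma_lattice[OF assms(2)] assms(3)]
    delta_pos[of n] m_ge1[of n] by simp

text \<open>Branches of the same level are disjoint: a common point forces s and s' to agree up to n,
  because the centres s(k), s'(k) are both within \<delta>_{k-1}/m_k of P_{k-1}, while distinct
  centres are 3\<delta>_{k-1}/m_k apart.\<close>
lemma Xns_disj:
  "s \<in> S_set r m n \<Longrightarrow> s' \<in> S_set r m n \<Longrightarrow> p \<in> Xns a r m n s \<Longrightarrow> p \<in> Xns a r m n s'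
    \<Longrightarrow> \<forall>k\<in>{1..n}. s k = s' k"
proof (induction n)
  case 0 then show ?case by simp
next
  case (Suc n)
  have s: "s \<in> S_set r m n" "s (Suc n) \<in> Sigma_set r m (Suc n)" using S_set_Suc[OF Suc.prems(1)] by auto
  have s': "s' \<in> S_set r m n" "s' (Suc n) \<in> Sigma_set r m (Suc n)" using S_set_Suc[OF Suc.prems(2)] by auto
  have p1: "p \<in> Xns a r m n s" using Xns_mono[OF Suc.prems(1)] Suc.prems(3) by blast
  have p2: "p \<in> Xns a r m n s'" using Xns_mono[OF Suc.prems(2)] Suc.prems(4) by blast
  have IH: "\<forall>k\<in>{1..n}. s k = s' k" using Suc.IH[OF s(1) s'(1) p1 p2] .
  have eq: "P n s p = P n s' p" using Ppoly_cong[OF IH] by simp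
  have pb: "p \<in> Bidisk" using Suc.prems(3) by (simp add: Xns_def)
  have b1: "cmod (P n s p - s (Suc n)) < \<delta> n / real (m (Suc n))"
    using step_bound[OF pb] Suc.prems(3) by (simp add: Xns_def)
  have b2: "cmod (P n s p - s' (Suc n)) < \<delta> n / real (m (Suc n))"
    using step_bound[OF pb] Suc.prems(4) eq by (simp add: Xns_def)
  have "cmod (s (Suc n) - s' (Suc n)) \<le> cmod (P n s p - s (Suc n)) + cmod (P n s p - s' (Suc n))"
    using dist_triangle2[of "s (Suc n)" "s' (Suc n)" "P n s p"] by (simp add: dist_norm norm_minus_commute)
  also have "\<dots> < 2 * (\<delta> n / real (m (Suc n)))" using b1 b2 by simp
  also have "\<dots> < 3 * \<delta> n / real (m (Suc n))" using delta_pos[of n] m_ge1[of n] by (simp add: field_simps)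
  finally have "s (Suc n) = s' (Suc n)" using Sigma_sep[OF s(2) s'(2)] by fastforce
  then show ?case using IH by (auto simp: le_Suc_eq)
qed

lemma bpoly_Afun: "bpoly (Afun a n)"
proof -
  have "bpoly (\<lambda>p. fst p - a n)" by (intro bpoly_diff bpoly.intros)
  moreover have "bpoly (\<lambda>p. fst p + (1/100) * snd p - a n)" by (intro bpoly_diff bpoly.intros)
  ultimately show ?thesis unfolding Afun_def[abs_def] by (cases "odd n") auto
qed

lemma bpoly_P: "bpoly (P n s)"
proof (induction n)
  case 0
  have "bpoly snd" by (rule bpoly_snd)
  then show ?case by (simp add: case_prod_beta)
next
  case (Suc n)
  have "bpoly (\<lambda>p. (P n s p - s (Suc n))^2 - complex_of_real (\<epsilon> (Suc n)) * Afun a (Suc n) p)"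
    by (intro bpoly_diff bpoly_power bpoly_mult Suc bpoly.intros bpoly_Afun)
  then show ?case by simp
qed

lemma cont_P: "continuous_on S (P n s)"
  using bpoly_cont bpoly_P by blast

text \<open>Each branch is open; hence the part of a compact subset of X_n in one branch is compact
  (its complement in K is covered by the other, open, branches).\<close>
lemma open_Xns: "open (Xns a r m n s)"
proof -
  have "Xns a r m n s = Bidisk \<inter> {p. cmod (P n s p) < \<delta> n}" by (auto simp: Xns_def)
  moreover have "open {p. cmod (P n s p) < \<delta> n}"
    by (rule open_Collect_less) (auto intro!: continuous_intros cont_P)
  ultimately show ?thesis using open_Bidisk by auto
qed

lemma piece_compact:
  assumes K: "compact K" "K \<subseteq> Xn a r m n" and s: "s \<in> S_set r m n"
  shows "compact (K \<inter> Xns a r m n s)"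
proof -
  define U where "U = \<Union>{Xns a r m n s' | s'. s' \<in> S_set r m n \<and> \<not> (\<forall>k\<in>{1..n}. s k = s' k)}"
  have oU: "open U" unfolding U_def using open_Xns by auto
  have "K \<inter> Xns a r m n s = K \<inter> (- U)"
  proof
    show "K \<inter> Xns a r m n s \<subseteq> K \<inter> - U"
      unfolding U_def using Xns_disj s by fastforce
    show "K \<inter> - U \<subseteq> K \<inter> Xns a r m n s"
    proof
      fix q assume q: "q \<in> K \<inter> - U"
      then obtain s' where s': "s' \<in> S_set r m n" "q \<in> Xns a r m n s'" using K(2) by (auto simp: Xn_def)
      show "q \<in> K \<inter> Xns a r m n s"
      proof (cases "\<forall>k\<in>{1..n}. s k = s' k")
        case True then show ?thesis using Xns_cong[OF True] s' q by auto
      next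
        case False then have "q \<in> U" unfolding U_def using s' by blast
        then show ?thesis using q by auto
      qed
    qed
  qed
  moreover have "closed (- U)" using oU by auto
  ultimately show ?thesis using K(1) by (simp add: compact_Int_closed)
qed

lemma S0: "S_set r m 0 = UNIV" by (auto simp: S_set_def)

lemma Xn0: "Xn a r m 0 = Xns a r m 0 s"
  unfolding Xn_def S0 using Xns_cong[of 0] by auto

text \<open>The spacing of the lattice containing Sigma_{n+1} and the radius gap_n = spacing_n / 3 of
  the disks around its points that contain the sub-branches.\<close>
abbreviation "spacing n \<equiv> 3 * \<delta> n / real (m (Suc n))"
abbreviation "gap n \<equiv> \<delta> n / real (m (Suc n))"

lemma gap_pos: "gap n > 0" using delta_pos[of n] m_ge1[of n] by simp

lemma gap_spacing: "0 < spacing n" "gap n < spacing n / 2" "spacing n / 3 = gap n"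
  using gap_pos[of n] by simp_all

lemma bounded_P_image:
  assumes "compact K"
  shows "bounded (P n s ` (K \<inter> A))"
proof -
  have "bounded (P n s ` K)" by (rule compact_imp_bounded[OF compact_continuous_image[OF cont_P assms]])
  then show ?thesis by (rule bounded_subset) auto
qed

lemma branch_sub_branch:
  assumes s: "s \<in> S_set r m n" and q: "q \<in> Xns a r m n s" "q \<in> Xn a r m (Suc n)"
  shows "\<exists>\<sigma>\<in>Sigma_set r m (Suc n). cmod (P n s q - \<sigma>) < gap n \<and> q \<in> Xns a r m (Suc n) (s(Suc n := \<sigma>))"
proof -
  obtain s'' where s'': "s'' \<in> S_set r m (Suc n)" "q \<in> Xns a r m (Suc n) s''" using q(2) by (auto simp: Xn_def)
  have s''n: "s'' \<in> S_set r m n" "s'' (Suc n) \<in> Sigma_set r m (Suc n)" using S_set_Suc[OF s''(1)] by auto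
  have qn: "q \<in> Xns a r m n s''" using Xns_mono[OF s''(1)] s''(2) by blast
  have ag: "\<forall>k\<in>{1..n}. s k = s'' k" using Xns_disj[OF s s''n(1) q(1) qn] .
  define \<sigma> where "\<sigma> = s'' (Suc n)"
  have ag2: "\<forall>k\<in>{1..Suc n}. (s(Suc n := \<sigma>)) k = s'' k" using ag by (auto simp: \<sigma>_def le_Suc_eq)
  have "q \<in> Xns a r m (Suc n) (s(Suc n := \<sigma>))" by (rule ssubst[OF Xns_cong[OF ag2]]) (rule s''(2))
  moreover have "cmod (P n s q - \<sigma>) < gap n"
  proof -
    have "q \<in> Bidisk" "cmod (P (Suc n) s'' q) < \<delta> (Suc n)" using s''(2) by (auto simp: Xns_def)
    then have "cmod (P n s'' q - s'' (Suc n)) < gap n" using step_bound by blast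
    then show ?thesis using Ppoly_cong[OF ag] by (simp add: \<sigma>_def)
  qed
  ultimately show ?thesis using s''n(2) by (auto simp: \<sigma>_def)
qed

lemma Sigma_S_upd: "s \<in> S_set r m n \<Longrightarrow> \<sigma> \<in> Sigma_set r m (Suc n) \<Longrightarrow> s(Suc n := \<sigma>) \<in> S_set r m (Suc n)"
  by (auto simp: S_set_def le_Suc_eq)

section \<open>Polynomial convexity of the limit set\<close>

definition fine_radius :: "nat \<Rightarrow> (nat \<Rightarrow> complex) \<Rightarrow> (complex \<times> complex) set \<Rightarrow> real \<Rightarrow> bool" where
  "fine_radius n s K R \<longleftrightarrow> 0 \<le> R \<and> R < gap n \<and>
     (\<forall>q\<in>K \<inter> Xns a r m n s. \<exists>\<sigma>\<in>Sigma_set r m (Suc n).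
        cmod (P n s q - \<sigma>) \<le> R \<and> q \<in> Xns a r m (Suc n) (s(Suc n := \<sigma>)))"

text \<open>By compactness of K \<inter> X_{n,s}, all radii above some R0 < gap_n are fine.\<close>
lemma fine_radius_exists:
  assumes K: "compact K" "K \<subseteq> Xn a r m (Suc n)" and s: "s \<in> S_set r m n"
  obtains R0 where "R0 < gap n" "\<And>R. R0 < R \<Longrightarrow> R < gap n \<Longrightarrow> fine_radius n s K R"
proof -
  have Kn: "K \<subseteq> Xn a r m n" using K(2) Xn_mono_Suc by blast
  have "\<forall>q\<in>K \<inter> Xns a r m n s. infdist (P n s q) (lattice (spacing n)) < gap n"
  proof
    fix q assume "q \<in> K \<inter> Xns a r m n s"
    then obtain \<sigma> where "\<sigma> \<in> Sigma_set r m (Suc n)" "cmod (P n s q - \<sigma>) < gap n"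
      using branch_sub_branch[OF s] K(2) by blast
    then show "infdist (P n s q) (lattice (spacing n)) < gap n"
      using infdist_le[OF Sigma_lattice, of \<sigma> n "P n s q"] by (simp add: dist_norm)
  qed
  moreover have "continuous_on (K \<inter> Xns a r m n s) (\<lambda>q. infdist (P n s q) (lattice (spacing n)))"
    by (intro continuous_intros cont_P)
  ultimately obtain \<beta> where \<beta>: "\<beta> < gap n" "\<forall>q\<in>K \<inter> Xns a r m n s. infdist (P n s q) (lattice (spacing n)) \<le> \<beta>"
    using compact_sup_less[OF piece_compact[OF K(1) Kn s]] by blast
  have "fine_radius n s K R" if R: "max 0 \<beta> < R" "R < gap n" for R
    unfolding fine_radius_def
  proof (intro conjI ballI)
    show "0 \<le> R" "R < gap n" using R by auto
    fix q assume q: "q \<in> K \<inter> Xns a r m n s"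
    obtain \<sigma> where \<sigma>: "\<sigma> \<in> Sigma_set r m (Suc n)" "cmod (P n s q - \<sigma>) < gap n"
        "q \<in> Xns a r m (Suc n) (s(Suc n := \<sigma>))"
      using branch_sub_branch[OF s] q K(2) by blast
    have "infdist (P n s q) (lattice (spacing n)) \<le> \<beta>" using \<beta>(2) q by blast
    then have "infdist (P n s q) (lattice (spacing n)) < R" using R(1) by linarith
    moreover have "lattice (spacing n) \<noteq> {}" using lattice_zero by blast
    ultimately obtain \<tau> where \<tau>: "\<tau> \<in> lattice (spacing n)" "cmod (P n s q - \<tau>) < R"
      using infdist_lessE by (metis dist_norm)
    have "R < spacing n / 2" using R(2) gap_spacing(2)[of n] by (rule less_trans)
    then have "\<tau> = \<sigma>"
      by (intro lattice_unique[OF gap_spacing(1) \<tau>(1) Sigma_lattice[OF \<sigma>(1)], of "P n s q"])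
        (use \<tau>(2) \<sigma>(2) gap_spacing(2)[of n] in linarith)+
    then show "\<exists>\<sigma>\<in>Sigma_set r m (Suc n). cmod (P n s q - \<sigma>) \<le> R \<and> q \<in> Xns a r m (Suc n) (s(Suc n := \<sigma>))"
      using \<sigma> \<tau>(2) by (intro bexI[of _ \<sigma>]) auto
  qed
  then show ?thesis using that[of "max 0 \<beta>"] \<beta>(1) gap_pos[of n] by auto
qed

lemma fine_radius_lattice:
  assumes R: "fine_radius n s K R" and q: "q \<in> K \<inter> Xns a r m n s"
    and \<tau>: "\<tau> \<in> lattice (spacing n)" "cmod (P n s q - \<tau>) \<le> R"
  shows "\<tau> \<in> Sigma_set r m (Suc n) \<and> q \<in> Xns a r m (Suc n) (s(Suc n := \<tau>))"
proof -
  obtain \<sigma> where \<sigma>: "\<sigma> \<in> Sigma_set r m (Suc n)" "cmod (P n s q - \<sigma>) \<le> R"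
      "q \<in> Xns a r m (Suc n) (s(Suc n := \<sigma>))"
    using R q by (auto simp: fine_radius_def)
  have "R < gap n" using R by (simp add: fine_radius_def)
  then have "R < spacing n / 2" using gap_spacing(2)[of n] by (rule less_trans)
  then have "\<tau> = \<sigma>"
    by (intro lattice_unique[OF gap_spacing(1) \<tau>(1) Sigma_lattice[OF \<sigma>(1)], of "P n s q"])
      (use \<tau>(2) \<sigma>(2) in linarith)+
  then show ?thesis using \<sigma> by simp
qed

lemma fine_radius_own:
  assumes R: "fine_radius n s K R" and s: "s \<in> S_set r m (Suc n)" and q: "q \<in> K \<inter> Xns a r m (Suc n) s"
  shows "cmod (P n s q - s (Suc n)) \<le> R"
proof -
  have "q \<in> K \<inter> Xns a r m n s" using q Xns_mono[OF s] by blast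
  then obtain \<sigma> where \<sigma>: "\<sigma> \<in> Sigma_set r m (Suc n)" "cmod (P n s q - \<sigma>) \<le> R"
      "q \<in> Xns a r m (Suc n) (s(Suc n := \<sigma>))"
    using R by (auto simp: fine_radius_def)
  have "\<forall>k\<in>{1..Suc n}. s k = (s(Suc n := \<sigma>)) k"
    using Xns_disj[OF s Sigma_S_upd[OF _ \<sigma>(1)]] S_set_Suc[OF s] q \<sigma>(3) by blast
  then have "s (Suc n) = (s(Suc n := \<sigma>)) (Suc n)" by (rule bspec) simp
  then have "s (Suc n) = \<sigma>" by simp
  then show ?thesis using \<sigma>(2) by simp
qed

lemma fine_radius_near_lattice:
  "fine_radius n s K R \<Longrightarrow> \<forall>\<zeta>\<in>P n s ` (K \<inter> Xns a r m n s). \<exists>\<tau>\<in>lattice (spacing n). cmod (\<zeta> - \<tau>) \<le> R"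
  using Sigma_lattice by (fastforce simp: fine_radius_def)

lemma fine_radius_some:
  assumes "compact K" "K \<subseteq> Xn a r m (Suc n)" "s \<in> S_set r m n"
  obtains R where "fine_radius n s K R"
proof -
  obtain R0 where R0: "R0 < gap n" "\<And>R. R0 < R \<Longrightarrow> R < gap n \<Longrightarrow> fine_radius n s K R"
    using fine_radius_exists[OF assms] by blast
  obtain R where "R0 < R" "R < gap n" using dense[OF R0(1)] by blast
  then show ?thesis using that R0(2) by blast
qed

lemma branch_indicator:
  assumes K: "compact K" and R: "fine_radius n s K R" and \<sigma>: "\<sigma> \<in> lattice (spacing n)" and \<eta>: "\<eta> > 0"
    and Y: "finite Y" "\<forall>y\<in>Y. \<exists>\<tau>\<in>lattice (spacing n). cmod (P n s y - \<tau>) \<le> R"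
  obtains g where "bpoly g"
    "\<forall>q\<in>K \<inter> Xns a r m n s \<union> Y. cmod (P n s q - \<sigma>) \<le> R \<longrightarrow> cmod (g q - 1) \<le> \<eta>"
    "\<forall>q\<in>K \<inter> Xns a r m n s \<union> Y. R < cmod (P n s q - \<sigma>) \<longrightarrow> cmod (g q) \<le> \<eta>"
proof -
  define L where "L = P n s ` (K \<inter> Xns a r m n s \<union> Y)"
  have "bounded L" using bounded_P_image[OF K, of n s "Xns a r m n s"] Y(1)
    unfolding L_def image_Un by (simp add: finite_imp_bounded)
  moreover have "\<forall>\<zeta>\<in>L. \<exists>\<tau>\<in>lattice (spacing n). cmod (\<zeta> - \<tau>) \<le> R"
    using fine_radius_near_lattice[OF R] Y(2) by (auto simp: L_def)
  moreover have "0 \<le> R" "R < spacing n / 3" using R unfolding fine_radius_def gap_spacing(3) by auto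
  ultimately obtain h where h: "upoly h" "\<forall>\<zeta>\<in>L. cmod (\<zeta> - \<sigma>) \<le> R \<longrightarrow> cmod (h \<zeta> - 1) \<le> \<eta>"
      "\<forall>\<zeta>\<in>L. R < cmod (\<zeta> - \<sigma>) \<longrightarrow> cmod (h \<zeta>) \<le> \<eta>"
    using indicator_approx[OF gap_spacing(1) _ _ _ _ \<sigma> \<eta>] by blast
  show ?thesis
    by (rule that[of "\<lambda>q. h (P n s q)"]) (use upoly_comp[OF h(1) bpoly_P] h(2,3) in \<open>auto simp: L_def\<close>)
qed

text \<open>Inductively, the localizer of the parent branch is multiplied by an approximate indicator of
  the disk around the new centre s(n+1).\<close>
lemma branch_localizer:
  "s \<in> S_set r m n \<Longrightarrow> compact K \<Longrightarrow> K \<subseteq> Xn a r m n \<Longrightarrow> \<eta> > 0 \<Longrightarrow>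
   \<exists>H. bpoly H \<and> (\<forall>q\<in>K \<inter> Xns a r m n s. cmod (H q - 1) \<le> \<eta>) \<and> (\<forall>q\<in>K - Xns a r m n s. cmod (H q) \<le> \<eta>)"
proof (induction n arbitrary: s K \<eta>)
  case 0
  have "K - Xns a r m 0 s = {}" using 0 Xn0[of s] by auto
  then show ?case using "0.prems"(4) by (intro exI[of _ "\<lambda>p. 1"]) (auto intro: bpoly_const)
next
  case (Suc n)
  note sS = Suc.prems(1) and K = Suc.prems(2,3) and \<eta> = Suc.prems(4)
  have s: "s \<in> S_set r m n" "s (Suc n) \<in> Sigma_set r m (Suc n)" using S_set_Suc[OF sS] by auto
  obtain R where R: "fine_radius n s K R" using fine_radius_some[OF K s(1)] by blast
  define \<eta>' where "\<eta>' = min 1 (\<eta>/3)"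
  have \<eta>': "0 < \<eta>'" "\<eta>' \<le> 1" "3 * \<eta>' \<le> \<eta>" using \<eta> by (auto simp: \<eta>'_def)
  obtain g where g: "bpoly g" "\<forall>q\<in>K \<inter> Xns a r m n s \<union> {}. cmod (P n s q - s (Suc n)) \<le> R \<longrightarrow> cmod (g q - 1) \<le> \<eta>'"
      "\<forall>q\<in>K \<inter> Xns a r m n s \<union> {}. R < cmod (P n s q - s (Suc n)) \<longrightarrow> cmod (g q) \<le> \<eta>'"
    using branch_indicator[OF K(1) R Sigma_lattice[OF s(2)] \<eta>'(1)] by blast
  obtain M where M: "M \<ge> 0" "\<forall>q\<in>K. cmod (g q) \<le> M" using sup_bound[OF K(1) bpoly_cont[OF g(1)]] by blast
  obtain e where e: "0 < e" "e \<le> \<eta>'" "e * M \<le> \<eta>'" using small_weight[OF M(1) \<eta>'(1)] by blast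
  have "K \<subseteq> Xn a r m n" using K(2) Xn_mono_Suc by blast
  then obtain H0 where H0: "bpoly H0" "\<forall>q\<in>K \<inter> Xns a r m n s. cmod (H0 q - 1) \<le> e"
      "\<forall>q\<in>K - K \<inter> Xns a r m n s. cmod (H0 q) \<le> e"
    using Suc.IH[OF s(1) K(1) _ e(1)] by blast
  have sub: "K \<inter> Xns a r m (Suc n) s \<subseteq> K \<inter> Xns a r m n s" using Xns_mono[OF sS] by blast
  have in_new: "\<forall>q\<in>K \<inter> Xns a r m (Suc n) s. cmod (g q - 1) \<le> \<eta>'"
    using g(2) fine_radius_own[OF R sS] sub by blast
  have out_new: "\<forall>q\<in>K \<inter> Xns a r m n s - K \<inter> Xns a r m (Suc n) s. cmod (g q) \<le> \<eta>'"
  proof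
    fix q assume q: "q \<in> K \<inter> Xns a r m n s - K \<inter> Xns a r m (Suc n) s"
    then have "\<not> cmod (P n s q - s (Suc n)) \<le> R"
      using fine_radius_lattice[OF R _ Sigma_lattice[OF s(2)]] by fastforce
    then show "cmod (g q) \<le> \<eta>'" using g(3) q by auto
  qed
  note bounds = product_indicator_bounds[OF sub less_imp_le[OF e(1)] e(2,3) \<eta>'(2) H0(2,3) in_new out_new M(2)]
  show ?case
  proof (intro exI conjI)
    show "bpoly (\<lambda>q. H0 q * g q)" by (rule bpoly_mult[OF H0(1) g(1)])
    show "\<forall>q\<in>K \<inter> Xns a r m (Suc n) s. cmod (H0 q * g q - 1) \<le> \<eta>"
      using bounds(1) \<eta>'(3) by (meson order_trans)
    show "\<forall>q\<in>K - Xns a r m (Suc n) s. cmod (H0 q * g q) \<le> \<eta>"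
    proof
      fix q assume "q \<in> K - Xns a r m (Suc n) s"
      then have "cmod (H0 q * g q) \<le> 2 * \<eta>'" using bounds(2) by blast
      then show "cmod (H0 q * g q) \<le> \<eta>" using \<eta>' by linarith
    qed
  qed
qed

text \<open>The resolvent at
  P_{n,s}(p) is approximable near the lattice by some g (escape lemma), and
  G = 1 - (P_{n,s} - P_{n,s}(p)) (g \<circ> P_{n,s}) equals 1 at p and is small on the branch.\<close>
lemma separation_far_from_lattice:
  assumes K: "compact K" and R: "fine_radius n s K R"
    and far: "\<forall>\<tau>\<in>lattice (spacing n). gap n \<le> cmod (P n s p - \<tau>)"
  shows "poly_separates (K \<inter> Xns a r m n s) p"
proof -
  define L where "L = P n s ` (K \<inter> Xns a r m n s)"
  have R': "0 \<le> R" "R < gap n" using R by (auto simp: fine_radius_def)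
  have "poly_approx L (\<lambda>\<zeta>. 1/(\<zeta> - P n s p))"
    by (rule escape[OF gap_spacing(1) R'(1) _ _ bounded_P_image[OF K] fine_radius_near_lattice[OF R],
          of "gap n - R", folded L_def]) (use R' far gap_spacing(2)[of n] in auto)
  have "continuous_on K (\<lambda>q. P n s q - P n s p)" by (intro continuous_intros cont_P)
  then obtain B where B: "B \<ge> 0" "\<forall>q\<in>K. cmod (P n s q - P n s p) \<le> B"
    using sup_bound[OF K] by blast
  define \<eta> where "\<eta> = 1 / (2 * (B + 1))"
  have \<eta>: "0 < \<eta>" "B * \<eta> \<le> 1/2" using B by (auto simp: \<eta>_def field_simps)
  obtain g where g: "upoly g" "\<forall>\<zeta>\<in>L. cmod (1/(\<zeta> - P n s p) - g \<zeta>) \<le> \<eta>"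
    using \<open>poly_approx L _\<close> \<eta>(1) unfolding poly_approx_def by blast
  define G where "G q = 1 - (P n s q - P n s p) * g (P n s q)" for q
  have "bpoly G" unfolding G_def[abs_def]
    by (intro bpoly_diff bpoly_mult bpoly_const bpoly_P upoly_comp[OF g(1) bpoly_P])
  moreover have "cmod (G q) \<le> 1/2" if q: "q \<in> K \<inter> Xns a r m n s" for q
  proof -
    obtain \<tau> where \<tau>: "\<tau> \<in> lattice (spacing n)" "cmod (P n s q - \<tau>) \<le> R"
      using fine_radius_near_lattice[OF R] q by blast
    have "P n s q \<noteq> P n s p" using far \<tau> R' by force
    then have "G q = (P n s q - P n s p) * (1/(P n s q - P n s p) - g (P n s q))"
      by (simp add: G_def field_simps)
    then have "cmod (G q) = cmod (P n s q - P n s p) * cmod (1/(P n s q - P n s p) - g (P n s q))"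
      by (simp add: norm_mult)
    also have "\<dots> \<le> B * \<eta>" using B g(2) q by (intro mult_mono) (auto simp: L_def)
    finally show ?thesis using \<eta>(2) by linarith
  qed
  moreover have "G p = 1" by (simp add: G_def)
  ultimately show ?thesis unfolding poly_separates_def by (intro exI[of _ G] exI[of _ 1]) auto
qed

text \<open>Separation, case 2: P_{n,s}(p) is R-close to a lattice point \<tau> outside Sigma_{n+1}.  The
  indicator of the R-disk around \<tau> separates p, as no sub-branch is centred at \<tau>.\<close>
lemma separation_off_grid:
  assumes K: "compact K" and R: "fine_radius n s K R"
    and \<tau>: "\<tau> \<in> lattice (spacing n)" "\<tau> \<notin> Sigma_set r m (Suc n)" "cmod (P n s p - \<tau>) \<le> R"
  shows "poly_separates (K \<inter> Xns a r m n s) p"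
proof -
  obtain g where g: "bpoly g" "\<forall>q\<in>K \<inter> Xns a r m n s \<union> {p}. cmod (P n s q - \<tau>) \<le> R \<longrightarrow> cmod (g q - 1) \<le> 1/4"
      "\<forall>q\<in>K \<inter> Xns a r m n s \<union> {p}. R < cmod (P n s q - \<tau>) \<longrightarrow> cmod (g q) \<le> 1/4"
    using branch_indicator[OF K R \<tau>(1), of "1/4" "{p}"] \<tau>(1,3) by auto
  have "\<forall>q\<in>K \<inter> Xns a r m n s. cmod (g q) \<le> (3/4) / 2"
  proof
    fix q assume q: "q \<in> K \<inter> Xns a r m n s"
    have "R < cmod (P n s q - \<tau>)" using fine_radius_lattice[OF R q \<tau>(1)] \<tau>(2) by force
    then show "cmod (g q) \<le> (3/4) / 2" using g(3) q by force
  qed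
  moreover have "3/4 \<le> cmod (g p)" using g(2) \<tau>(3) norm_triangle_ineq3[of "g p" 1] by force
  ultimately show ?thesis using g(1) unfolding poly_separates_def by (intro exI[of _ g] exI[of _ "3/4"]) auto
qed

text \<open>A point p of the bidisk outside a sub-branch X_{n+1,s'} is separated from the part of K
  in that sub-branch by a power of P_{n+1,s'}, since |P_{n+1,s'}| < \<delta>_{n+1} attains a maximum
  below \<delta>_{n+1} on that compact part.\<close>
lemma sub_branch_peak:
  assumes K: "compact K" "K \<subseteq> Xn a r m (Suc n)" and s': "s' \<in> S_set r m (Suc n)"
    and p: "p \<in> Bidisk" "p \<notin> Xns a r m (Suc n) s'"
  obtains N where "\<delta> (Suc n) ^ N \<le> cmod (P (Suc n) s' p) ^ N"
    "\<forall>q\<in>K \<inter> Xns a r m (Suc n) s'. cmod (P (Suc n) s' q) ^ N \<le> \<delta> (Suc n) ^ N / 16"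
proof -
  define D where "D = \<delta> (Suc n)"
  have D: "D > 0" unfolding D_def by (rule delta_pos)
  have "continuous_on (K \<inter> Xns a r m (Suc n) s') (\<lambda>q. cmod (P (Suc n) s' q))"
    by (intro continuous_intros cont_P)
  moreover have "\<forall>q\<in>K \<inter> Xns a r m (Suc n) s'. cmod (P (Suc n) s' q) < D" by (simp add: Xns_def D_def)
  ultimately obtain \<beta> where \<beta>: "\<beta> < D" "\<forall>q\<in>K \<inter> Xns a r m (Suc n) s'. cmod (P (Suc n) s' q) \<le> \<beta>"
    using compact_sup_less[OF piece_compact[OF K s']] by blast
  have \<beta>': "0 \<le> max 0 \<beta> / D" "max 0 \<beta> / D < 1" using \<beta>(1) D by auto
  obtain N where N: "(max 0 \<beta> / D) ^ N < 1/16" using real_arch_pow_inv[of "1/16", OF _ \<beta>'(2)] by auto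
  then have \<beta>N: "max 0 \<beta> ^ N \<le> D ^ N / 16" using D by (simp add: power_divide field_simps)
  show ?thesis
  proof (rule that)
    have "D \<le> cmod (P (Suc n) s' p)" using p by (force simp: Xns_def D_def)
    then show "\<delta> (Suc n) ^ N \<le> cmod (P (Suc n) s' p) ^ N" using D by (simp add: D_def power_mono)
    show "\<forall>q\<in>K \<inter> Xns a r m (Suc n) s'. cmod (P (Suc n) s' q) ^ N \<le> \<delta> (Suc n) ^ N / 16"
    proof
      fix q assume "q \<in> K \<inter> Xns a r m (Suc n) s'"
      then have "cmod (P (Suc n) s' q) ^ N \<le> max 0 \<beta> ^ N" using \<beta>(2) by (intro power_mono) force+
      then show "cmod (P (Suc n) s' q) ^ N \<le> \<delta> (Suc n) ^ N / 16" using \<beta>N by (simp add: D_def)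
    qed
  qed
qed

text \<open>Multiply the indicator of the R-disk around \<sigma>, which kills the other sub-branches,
  by a power of P_{n+1,s(n+1:=\<sigma>)}, which is small on the sub-branch of \<sigma>.\<close>
lemma separation_on_grid:
  assumes K: "compact K" "K \<subseteq> Xn a r m (Suc n)" and s: "s \<in> S_set r m n" and R: "fine_radius n s K R"
    and p: "p \<in> Bidisk" "p \<notin> Xn a r m (Suc n)"
    and \<sigma>: "\<sigma> \<in> Sigma_set r m (Suc n)" "cmod (P n s p - \<sigma>) \<le> R"
  shows "poly_separates (K \<inter> Xns a r m n s) p"
proof -
  define s' where "s' = s(Suc n := \<sigma>)"
  have s': "s' \<in> S_set r m (Suc n)" unfolding s'_def by (rule Sigma_S_upd[OF s \<sigma>(1)])
  then have "p \<notin> Xns a r m (Suc n) s'" using p(2) by (auto simp: Xn_def)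
  then obtain N where N: "\<delta> (Suc n) ^ N \<le> cmod (P (Suc n) s' p) ^ N"
      "\<forall>q\<in>K \<inter> Xns a r m (Suc n) s'. cmod (P (Suc n) s' q) ^ N \<le> \<delta> (Suc n) ^ N / 16"
    using sub_branch_peak[OF K s' p(1)] by blast
  define DN where "DN = \<delta> (Suc n) ^ N"
  have DN: "DN > 0" unfolding DN_def by (intro zero_less_power delta_pos)
  obtain M where M: "M \<ge> 0" "\<forall>q\<in>K. cmod (P (Suc n) s' q) \<le> M" using sup_bound[OF K(1) cont_P] by blast
  obtain \<eta> where \<eta>: "0 < \<eta>" "\<eta> \<le> min (1/4) (DN/10)" "\<eta> * M ^ N \<le> min (1/4) (DN/10)"
    using small_weight[of "M ^ N" "min (1/4) (DN/10)"] M(1) DN by auto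
  obtain g where g: "bpoly g" "\<forall>q\<in>K \<inter> Xns a r m n s \<union> {p}. cmod (P n s q - \<sigma>) \<le> R \<longrightarrow> cmod (g q - 1) \<le> \<eta>"
      "\<forall>q\<in>K \<inter> Xns a r m n s \<union> {p}. R < cmod (P n s q - \<sigma>) \<longrightarrow> cmod (g q) \<le> \<eta>"
    using branch_indicator[OF K(1) R Sigma_lattice[OF \<sigma>(1)] \<eta>(1), of "{p}"] Sigma_lattice[OF \<sigma>(1)] \<sigma>(2)
    by auto
  define G where "G q = g q * P (Suc n) s' q ^ N" for q
  have "bpoly G" unfolding G_def by (intro bpoly_mult bpoly_power g(1) bpoly_P)
  moreover have "cmod (G q) \<le> (3/4 * DN) / 2" if q: "q \<in> K \<inter> Xns a r m n s" for q
  proof (cases "q \<in> Xns a r m (Suc n) s'")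
    case True
    have "cmod (g q) \<le> 5/4"
      using g(2,3) q \<eta>(2) norm_triangle_ineq2[of "g q" 1] by (cases "cmod (P n s q - \<sigma>) \<le> R") force+
    then have "cmod (G q) \<le> 5/4 * (DN / 16)" unfolding G_def norm_mult norm_power
      using N(2) q True by (intro mult_mono) (auto simp: DN_def)
    then show ?thesis using DN by simp
  next
    case False
    have "R < cmod (P n s q - \<sigma>)"
      using fine_radius_lattice[OF R q Sigma_lattice[OF \<sigma>(1)]] False by (force simp: s'_def)
    then have "cmod (g q) \<le> \<eta>" using g(3) q by blast
    then have "cmod (G q) \<le> \<eta> * M ^ N" unfolding G_def norm_mult norm_power
      using M q \<eta>(1) by (intro mult_mono power_mono) auto
    then show ?thesis using \<eta>(3) DN by simp
  qed
  moreover have "3/4 * DN \<le> cmod (G p)"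
  proof -
    have "3/4 \<le> cmod (g p)" using g(2) \<sigma>(2) \<eta>(2) norm_triangle_ineq3[of "g p" 1] by force
    then show ?thesis unfolding G_def norm_mult norm_power using N(1) DN
      by (intro mult_mono) (auto simp: DN_def)
  qed
  ultimately show ?thesis unfolding poly_separates_def using DN
    by (intro exI[of _ G] exI[of _ "3/4 * DN"]) auto
qed

lemma branch_exit_separated:
  assumes K: "compact K" "K \<subseteq> Xn a r m (Suc n)" and s: "s \<in> S_set r m n"
    and p: "p \<in> Xns a r m n s" "p \<notin> Xn a r m (Suc n)"
  shows "poly_separates (K \<inter> Xns a r m n s) p"
proof -
  obtain R0 where R0: "R0 < gap n" "\<And>R. R0 < R \<Longrightarrow> R < gap n \<Longrightarrow> fine_radius n s K R"
    using fine_radius_exists[OF K s] by blast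
  obtain \<tau> where \<tau>: "\<tau> \<in> lattice (spacing n)" "\<forall>\<sigma>\<in>lattice (spacing n). cmod (P n s p - \<tau>) \<le> cmod (P n s p - \<sigma>)"
    using nearest[OF gap_spacing(1)] by blast
  show ?thesis
  proof (cases "cmod (P n s p - \<tau>) < gap n")
    case False
    obtain R where "R0 < R" "R < gap n" using dense[OF R0(1)] by blast
    then have R: "fine_radius n s K R" by (rule R0(2))
    have "\<forall>\<sigma>\<in>lattice (spacing n). gap n \<le> cmod (P n s p - \<sigma>)" using \<tau>(2) False by force
    then show ?thesis by (rule separation_far_from_lattice[OF K(1) R])
  next
    case True
    obtain R where "max R0 (cmod (P n s p - \<tau>)) < R" "R < gap n"
      using dense[of "max R0 (cmod (P n s p - \<tau>))" "gap n"] R0(1) True by auto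
    then have R: "fine_radius n s K R" and near: "cmod (P n s p - \<tau>) \<le> R" using R0(2) by auto
    show ?thesis
    proof (cases "\<tau> \<in> Sigma_set r m (Suc n)")
      case True
      show ?thesis by (rule separation_on_grid[OF K s R _ p(2) True near]) (use p(1) in \<open>simp add: Xns_def\<close>)
    next
      case False
      show ?thesis by (rule separation_off_grid[OF K(1) R \<tau>(1) False near])
    qed
  qed
qed

text \<open>Base of the induction: coordinatewise bounds pass to the hull.\<close>
lemma hull_in_X0:
  assumes K: "compact K" "K \<subseteq> Xn a r m 0" and p: "p \<in> poly_hull K"
  shows "p \<in> Xn a r m 0"
proof -
  have K0: "K \<subseteq> Xns a r m 0 (\<lambda>k. 0)" using K(2) Xn0[of "\<lambda>k. 0"] by simp
  have small: "\<forall>q\<in>K. cmod (fst q) < 1/2" "\<forall>q\<in>K. cmod (snd q) < 1/2"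
    using K0 by (auto simp: Xns_def Bidisk_def)
  have "continuous_on K (\<lambda>q. cmod (fst q))" "continuous_on K (\<lambda>q. cmod (snd q))"
    by (intro continuous_intros)+
  then obtain \<beta>1 \<beta>2 where "\<beta>1 < 1/2" "\<forall>q\<in>K. cmod (fst q) \<le> \<beta>1" "\<beta>2 < 1/2" "\<forall>q\<in>K. cmod (snd q) \<le> \<beta>2"
    using compact_sup_less[OF K(1) _ small(1)] compact_sup_less[OF K(1) _ small(2)] by blast
  then have "cmod (fst p) < 1/2" "cmod (snd p) < 1/2"
    using hull_le[OF p bpoly_fst] hull_le[OF p bpoly_snd] by (meson le_less_trans)+
  then have "p \<in> Xns a r m 0 (\<lambda>k. 0)" by (cases p) (simp add: Xns_def Bidisk_def)
  then show ?thesis using Xn0 by simp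
qed

text \<open>Induction step: combine the separation with the localizer of the branch of p.\<close>
lemma hull_in_next_level:
  assumes K: "compact K" "K \<subseteq> Xn a r m (Suc n)" and p: "p \<in> poly_hull K" "p \<in> Xn a r m n"
  shows "p \<in> Xn a r m (Suc n)"
proof (rule ccontr)
  assume pn: "p \<notin> Xn a r m (Suc n)"
  obtain s where s: "s \<in> S_set r m n" "p \<in> Xns a r m n s" using p(2) by (auto simp: Xn_def)
  have Kp: "compact (insert p K)" using K(1) by (rule compact_insert)
  have Kp_sub: "insert p K \<subseteq> Xn a r m n" using K(2) Xn_mono_Suc p(2) by blast
  have "\<exists>H. bpoly H \<and> cmod (H p - 1) \<le> e \<and> (\<forall>q\<in>K \<inter> Xns a r m n s. cmod (H q - 1) \<le> e)
      \<and> (\<forall>q\<in>K - Xns a r m n s. cmod (H q) \<le> e)" if "e > 0" for e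
  proof -
    have "\<exists>H. bpoly H \<and> (\<forall>q\<in>insert p K \<inter> Xns a r m n s. cmod (H q - 1) \<le> e)
        \<and> (\<forall>q\<in>insert p K - Xns a r m n s. cmod (H q) \<le> e)"
      by (rule branch_localizer[OF s(1) Kp Kp_sub that])
    then obtain H where "bpoly H \<and> (\<forall>q\<in>insert p K \<inter> Xns a r m n s. cmod (H q - 1) \<le> e)
        \<and> (\<forall>q\<in>insert p K - Xns a r m n s. cmod (H q) \<le> e)" ..
    then show ?thesis using s(2) by (intro exI[of _ H]) simp
  qed
  then show False
    using hull_localized_separation[OF p(1) K(1) branch_exit_separated[OF K s pn]] by blast
qed

theorem poly_convex_Xlim: "poly_convex (Xlim a r m)"
  unfolding poly_convex_def
proof (intro allI impI subsetI)
  fix K p assume K: "compact K \<and> K \<subseteq> Xlim a r m" and p: "p \<in> poly_hull K"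
  have "p \<in> Xn a r m n" for n
  proof (induction n)
    case 0 then show ?case using hull_in_X0[OF _ _ p] K by (auto simp: Xlim_def)
  next
    case (Suc n) then show ?case using hull_in_next_level[OF _ _ p] K by (auto simp: Xlim_def)
  qed
  then show "p \<in> Xlim a r m" by (simp add: Xlim_def)
qed

theorem horizontal_Xlim: "horizontal (Xlim a r m)"
proof -
  have X0: "Xlim a r m \<subseteq> Xns a r m 0 (\<lambda>k. 0)" using Xn0[of "\<lambda>k. 0"] by (auto simp: Xlim_def)
  show ?thesis unfolding horizontal_def
  proof
    show "Xlim a r m \<subseteq> Bidisk" using X0 by (auto simp: Xns_def)
    show "\<exists>e>0. Xlim a r m \<subseteq> {(z, w). cmod z < 1/2 \<and> cmod w < 1 - e}"
      using X0 by (intro exI[of _ "1/2"]) (auto simp: Xns_def Bidisk_def)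
  qed
qed

end

section \<open>Holomorphic disks\<close>

text \<open>A dense set of values is attained at arbitrarily large indices: the finitely many values
  a(0), ..., a(N-1) can be removed from a neighbourhood of c without emptying it.\<close>
lemma dense_index:
  fixes a :: "nat \<Rightarrow> complex"
  assumes d: "ball 0 (1/4) \<subseteq> closure {a (h p) | p. Q p}" and c: "cmod c < 1/4" and \<eta>: "\<eta> > 0"
  shows "\<exists>p. Q p \<and> h p \<ge> N \<and> cmod (a (h p) - c) < \<eta>"
proof -
  define Fin where "Fin = a ` {..<N}"
  define W where "W = ball c \<eta> \<inter> ball 0 (1/4)"
  have oW: "open W" and cW: "c \<in> W" using c \<eta> by (auto simp: W_def)
  have "infinite W" by (rule infinite_openin[of UNIV]) (use oW cW in auto)
  then have ne: "W - Fin \<noteq> {}" unfolding Fin_def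
    by (metis Diff_eq_empty_iff finite_imageI finite_lessThan finite_subset)
  have oV: "open (W - Fin)" unfolding Fin_def by (intro open_Diff oW finite_imp_closed) auto
  have "W - Fin \<subseteq> closure {a (h p) | p. Q p}" using d by (auto simp: W_def)
  then have "(W - Fin) \<inter> closure {a (h p) | p. Q p} \<noteq> {}" using ne by auto
  then have "(W - Fin) \<inter> {a (h p) | p. Q p} \<noteq> {}" using open_Int_closure_eq_empty[OF oV] by blast
  then obtain p where p: "Q p" "a (h p) \<in> W" "a (h p) \<notin> Fin" by blast
  have "h p \<ge> N" using p(3) unfolding Fin_def by (meson imageI lessThan_iff not_le)
  moreover have "cmod (a (h p) - c) < \<eta>" using p(2) by (auto simp: W_def dist_norm norm_minus_commute)
  ultimately show ?thesis using p(1) by blast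
qed

lemma field_deriv_linear_bound:
  assumes dF: "(F has_field_derivative \<alpha>) (at t1)" and e: "e > 0"
  obtains d where "d > 0" "\<And>y. dist y t1 < d \<Longrightarrow> cmod (F y - F t1 - \<alpha> * (y - t1)) \<le> e * cmod (y - t1)"
proof -
  have "((\<lambda>y. (F y - F t1) / (y - t1)) \<longlongrightarrow> \<alpha>) (at t1)" using dF has_field_derivative_iff by blast
  then have "\<forall>\<^sub>F y in at t1. dist ((F y - F t1) / (y - t1)) \<alpha> < e" using e by (intro tendstoD) auto
  then obtain d where d: "d > 0" "\<And>y. y \<noteq> t1 \<Longrightarrow> dist y t1 < d \<Longrightarrow> dist ((F y - F t1) / (y - t1)) \<alpha> < e"
    by (auto simp: eventually_at)
  have "cmod (F y - F t1 - \<alpha> * (y - t1)) \<le> e * cmod (y - t1)" if y: "dist y t1 < d" for y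
  proof (cases "y = t1")
    case False
    then have "F y - F t1 - \<alpha> * (y - t1) = (y - t1) * ((F y - F t1) / (y - t1) - \<alpha>)"
      by (simp add: field_simps)
    then have "cmod (F y - F t1 - \<alpha> * (y - t1)) = cmod (y - t1) * cmod ((F y - F t1) / (y - t1) - \<alpha>)"
      by (simp add: norm_mult)
    also have "\<dots> \<le> cmod (y - t1) * e" using d(2)[OF False y] by (intro mult_left_mono) (auto simp: dist_norm)
    finally show ?thesis by (simp add: mult.commute)
  qed simp
  then show ?thesis using that d(1) by blast
qed

text \<open>Two square roots of z(1 + x0) and -z(1 + x1), with |x0|, |x1| < 1, have a non-real
  quotient: otherwise -(1 + x1) would be a nonnegative multiple of 1 + x0, but the real parts
  of these two numbers have opposite signs.\<close>
lemma sqrt_ratio_not_real: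
  fixes u0 u1 z x0 x1 :: complex
  assumes u0: "u0 ^ 2 = z * (1 + x0)" and u1: "u1 ^ 2 = - z * (1 + x1)"
    and z: "z \<noteq> 0" and x: "cmod x0 < 1" "cmod x1 < 1"
  shows "Im (u1 / u0) \<noteq> 0"
proof
  assume "Im (u1 / u0) = 0"
  define q where "q = Re (u1 / u0)"
  have "u1 / u0 = of_real q" using \<open>Im (u1 / u0) = 0\<close> by (simp add: complex_eq_iff q_def)
  have "1 + x0 \<noteq> 0" using x(1) by (metis add_eq_0_iff norm_minus_cancel norm_one order_less_irrefl)
  then have "u0 \<noteq> 0" using u0 z by auto
  then have "u1 = of_real q * u0" using \<open>u1 / u0 = of_real q\<close> by (simp add: field_simps)
  then have "- z * (1 + x1) = of_real (q^2) * u0 ^ 2" using u1 by (simp add: power_mult_distrib)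
  also have "\<dots> = z * (of_real (q^2) * (1 + x0))" using u0 by simp
  finally have "- z * (1 + x1) = z * (of_real (q^2) * (1 + x0))" .
  then have "z * (-(1 + x1)) = z * (of_real (q^2) * (1 + x0))" by (metis mult_minus_left mult_minus_right)
  then have "-(1 + x1) = of_real (q^2) * (1 + x0)" using z by (simp only: mult_cancel_left) simp
  then have "Re (-(1 + x1)) = Re (of_real (q^2) * (1 + x0))" by (rule arg_cong)
  then have "- (1 + Re x1) = q^2 * (1 + Re x0)" by simp
  moreover have "-1 < Re x1" "-1 < Re x0" using abs_Re_le_cmod[of x1] abs_Re_le_cmod[of x0] x by linarith+
  ultimately show False by (smt (verit) mult_nonneg_nonneg zero_le_power2)
qed

text \<open>A function of the form z(\<theta>) (1 + x(\<theta>)) on the circle, with z(\<theta> + \<pi>) = -z(\<theta>) and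
  |x| < 1, winds once around 0 and therefore has no continuous square root u: otherwise the
  quotient Q(\<theta>) = u(\<theta> + \<pi>)/u(\<theta>) would never be real (its square is close to -1), yet
  Q(\<pi>) = 1/Q(0), so Im Q changes sign on [0, \<pi>].\<close>
lemma no_continuous_sqrt_winding:
  fixes u z x :: "real \<Rightarrow> complex"
  assumes cu: "continuous_on UNIV u" and per: "u (2 * pi) = u 0"
    and sq: "\<And>\<theta>. u \<theta> ^ 2 = z \<theta> * (1 + x \<theta>)"
    and z: "\<And>\<theta>. z (\<theta> + pi) = - z \<theta>" "\<And>\<theta>. z \<theta> \<noteq> 0" and x: "\<And>\<theta>. cmod (x \<theta>) < 1"
  shows False
proof -
  have x1: "1 + x \<theta> \<noteq> 0" for \<theta> using x[of \<theta>] by (metis add_eq_0_iff norm_minus_cancel norm_one order_less_irrefl)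
  have u0: "u \<theta> \<noteq> 0" for \<theta> using sq[of \<theta>] z(2)[of \<theta>] x1[of \<theta>] by auto
  define Q where "Q \<theta> = u (\<theta> + pi) / u \<theta>" for \<theta>
  have ImQ: "Im (Q \<theta>) \<noteq> 0" for \<theta>
    unfolding Q_def by (rule sqrt_ratio_not_real[OF sq[of \<theta>] _ z(2) x[of \<theta>] x[of "\<theta> + pi"]])
      (simp add: sq z(1))
  have cu2: "continuous_on UNIV (\<lambda>\<theta>. u (\<theta> + pi))"
    by (rule continuous_on_compose2[OF cu]) (auto intro!: continuous_intros)
  have cQ: "continuous_on {0..pi} (\<lambda>\<theta>. Im (Q \<theta>))" unfolding Q_def
    by (intro continuous_intros continuous_on_subset[OF cu2] continuous_on_subset[OF cu]) (use u0 in auto)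
  have "Q pi = inverse (Q 0)" using per by (simp add: Q_def)
  then have ImQpi: "Im (Q pi) = - Im (Q 0) / ((Re (Q 0))^2 + (Im (Q 0))^2)" by (simp add: power2_eq_square)
  have den: "(Re (Q 0))^2 + (Im (Q 0))^2 > 0" using ImQ[of 0] by (intro add_nonneg_pos) auto
  have "\<exists>\<theta>. 0 \<le> \<theta> \<and> \<theta> \<le> pi \<and> Im (Q \<theta>) = 0"
  proof (cases "Im (Q 0) > 0")
    case True
    then have "Im (Q pi) < 0" using ImQpi den by (simp add: divide_neg_pos)
    then show ?thesis using IVT2'[of "\<lambda>\<theta>. Im (Q \<theta>)" pi 0 0, OF _ _ _ cQ] True by fastforce
  next
    case False
    then have f: "Im (Q 0) < 0" using ImQ[of 0] by linarith
    then have "Im (Q 0) / ((Re (Q 0))^2 + (Im (Q 0))^2) < 0" using den by (rule divide_neg_pos)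
    then have "Im (Q pi) > 0" using ImQpi by simp
    then show ?thesis using IVT'[of "\<lambda>\<theta>. Im (Q \<theta>)" 0 0 pi, OF _ _ _ cQ] f by fastforce
  qed
  then show False using ImQ by blast
qed

lemma good_index:
  fixes r :: "nat \<Rightarrow> real" and a :: "nat \<Rightarrow> complex"
  assumes r_lim: "r \<longlonglongrightarrow> 0" and a_dense: "\<And>\<eta> N. \<eta> > 0 \<Longrightarrow> \<exists>k\<in>KS. k \<ge> N \<and> cmod (a k - w) < \<eta>"
    and KS1: "\<And>k. k \<in> KS \<Longrightarrow> k \<ge> 1" and c: "c > 0"
  shows "\<exists>n. Suc n \<in> KS \<and> r (Suc n) < c \<and> cmod (a (Suc n) - w) < c"
proof -
  have "\<forall>\<^sub>F k in sequentially. r k < c" using order_tendstoD(2)[OF r_lim c] .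
  then obtain N0 where N0: "\<And>k. k \<ge> N0 \<Longrightarrow> r k < c" by (auto simp: eventually_sequentially)
  obtain k where k: "k \<in> KS" "k \<ge> N0" "cmod (a k - w) < c" using a_dense[OF c] by blast
  obtain n where "k = Suc n" using KS1[OF k(1)] by (cases k) auto
  then show ?thesis using k(1,3) N0[OF k(2)] by blast
qed

lemma circle_relative_error:
  fixes F :: "complex \<Rightarrow> complex"
  assumes lin: "\<And>y. dist y t1 < d \<Longrightarrow> cmod (F y - F t1 - \<alpha> * (y - t1)) \<le> cmod \<alpha> / 10 * cmod (y - t1)"
    and \<rho>: "0 < \<rho>" "\<rho> < d" and \<alpha>: "\<alpha> \<noteq> 0"
    and b: "cmod (F t1 - b) < cmod \<alpha> * \<rho> / 10" and E: "cmod E \<le> cmod \<alpha> * \<rho> / 2"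
  shows "cmod ((F (t1 + of_real \<rho> * cis \<theta>) - b + E - \<alpha> * of_real \<rho> * cis \<theta>) / (\<alpha> * of_real \<rho> * cis \<theta>)) < 1"
proof -
  define y where "y = t1 + of_real \<rho> * cis \<theta>"
  have y: "cmod (y - t1) = \<rho>" "dist y t1 < d" using \<rho> by (simp_all add: y_def dist_norm norm_mult)
  have "F y - b + E - \<alpha> * of_real \<rho> * cis \<theta> = (F y - F t1 - \<alpha> * (y - t1)) + (F t1 - b) + E"
    by (simp add: y_def algebra_simps)
  then have "cmod (F y - b + E - \<alpha> * of_real \<rho> * cis \<theta>) \<le> cmod (F y - F t1 - \<alpha> * (y - t1)) + cmod (F t1 - b) + cmod E"
    by (metis norm_triangle_le norm_triangle_ineq add_mono order_refl)
  moreover have "cmod (F y - F t1 - \<alpha> * (y - t1)) \<le> cmod \<alpha> / 10 * \<rho>" using lin[OF y(2)] y(1) by simp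
  moreover have "0 < cmod \<alpha> * \<rho>" using \<alpha> \<rho> by simp
  ultimately have "cmod (F y - b + E - \<alpha> * of_real \<rho> * cis \<theta>) < cmod \<alpha> * \<rho>" using b E by argo
  then show ?thesis using \<alpha> \<rho> by (simp add: y_def norm_divide norm_mult)
qed

context construction
begin

text \<open>A connected family of points of X_k, in particular a holomorphic disk, stays in a single
  branch of level k, since the branches are disjoint open sets.\<close>
lemma disk_branch:
  assumes cont: "continuous_on (ball 0 1) \<phi>" and inX: "\<forall>t\<in>ball 0 1. \<phi> t \<in> Xn a r m k"
  shows "\<exists>s\<in>S_set r m k. \<forall>t\<in>ball (0::complex) 1. \<phi> t \<in> Xns a r m k s"
proof -
  have "\<phi> 0 \<in> Xn a r m k" using inX by simp
  then obtain s0 where s0: "s0 \<in> S_set r m k" "\<phi> 0 \<in> Xns a r m k s0" by (auto simp: Xn_def)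
  define W where "W = \<Union>{Xns a r m k s' | s'. s' \<in> S_set r m k \<and> \<not> (\<forall>j\<in>{1..k}. s0 j = s' j)}"
  have oW: "open W" unfolding W_def using open_Xns by auto
  define U1 where "U1 = ball 0 1 \<inter> \<phi> -` Xns a r m k s0"
  define U2 where "U2 = ball 0 1 \<inter> \<phi> -` W"
  have o1: "open U1" unfolding U1_def by (rule continuous_open_preimage[OF cont open_ball open_Xns])
  have o2: "open U2" unfolding U2_def by (rule continuous_open_preimage[OF cont open_ball oW])
  have disj: "U1 \<inter> U2 \<inter> ball 0 1 = {}"
    unfolding U1_def U2_def W_def using Xns_disj s0(1) by fastforce
  have cov: "ball 0 1 \<subseteq> U1 \<union> U2"
  proof
    fix t :: complex assume t: "t \<in> ball 0 1"
    then have "\<phi> t \<in> Xn a r m k" using inX by blast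
    then obtain s' where s': "s' \<in> S_set r m k" "\<phi> t \<in> Xns a r m k s'" by (auto simp: Xn_def)
    show "t \<in> U1 \<union> U2"
    proof (cases "\<forall>j\<in>{1..k}. s0 j = s' j")
      case True then show ?thesis using Xns_cong[OF True] s' t by (auto simp: U1_def)
    next
      case False then show ?thesis using s' t unfolding U2_def W_def by blast
    qed
  qed
  have "U1 \<inter> ball 0 1 = {} \<or> U2 \<inter> ball 0 1 = {}"
    by (rule connectedD[OF connected_ball o1 o2 disj cov])
  moreover have "0 \<in> U1 \<inter> ball 0 1" using s0 by (auto simp: U1_def)
  ultimately have "U2 \<inter> ball 0 1 = {}" by blast
  then have "\<forall>t\<in>ball 0 1. \<phi> t \<in> Xns a r m k s0" using cov unfolding U1_def by blast
  then show ?thesis using s0(1) by blast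
qed

lemma branch_square:
  assumes "p \<in> Xns a r m (Suc n) s"
  shows "(P n s p - s (Suc n))^2 = of_real (\<epsilon> (Suc n)) * (Afun a (Suc n) p + P (Suc n) s p / of_real (\<epsilon> (Suc n)))"
    and "cmod (P (Suc n) s p / of_real (\<epsilon> (Suc n))) < r (Suc n) / 2"
proof -
  have ep: "\<epsilon> (Suc n) > 0" by (rule eps_pos)
  then show "(P n s p - s (Suc n))^2 = of_real (\<epsilon> (Suc n)) * (Afun a (Suc n) p + P (Suc n) s p / of_real (\<epsilon> (Suc n)))"
    by (simp add: field_simps)
  have "cmod (P (Suc n) s p) < \<delta> (Suc n)" using assms unfolding Xns_def by blast
  then have "cmod (P (Suc n) s p) < \<epsilon> (Suc n) * r (Suc n) / 2" by (simp only: delta_Suc_eps)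
  then show "cmod (P (Suc n) s p / of_real (\<epsilon> (Suc n))) < r (Suc n) / 2"
    using ep by (simp add: norm_divide field_simps)
qed

text \<open>On the circle of radius \<rho>
  around t1, P_{n,s}(\<phi>) - s(n+1) is then a continuous square root of
  \<epsilon>_{n+1} \<alpha> \<rho> e^{i\<theta>} (1 + x(\<theta>)) with |x| < 1, which is impossible.\<close>
lemma branch_circle_contradiction:
  fixes F :: "complex \<Rightarrow> complex" and \<phi> :: "complex \<Rightarrow> complex \<times> complex"
  assumes c\<phi>: "continuous_on (ball 0 1) \<phi>" and s: "\<forall>t\<in>ball 0 1. \<phi> t \<in> Xns a r m (Suc n) s"
    and Aeq: "\<And>t. Afun a (Suc n) (\<phi> t) = F t - a (Suc n)"
    and lin: "\<And>y. dist y t1 < d \<Longrightarrow> cmod (F y - F t1 - \<alpha> * (y - t1)) \<le> cmod \<alpha> / 10 * cmod (y - t1)"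
    and \<rho>: "0 < \<rho>" "\<rho> < d" "cmod t1 + \<rho> < 1" and \<alpha>0: "\<alpha> \<noteq> 0"
    and small: "r (Suc n) < cmod \<alpha> * \<rho> / 10" "cmod (a (Suc n) - F t1) < cmod \<alpha> * \<rho> / 10"
  shows False
proof -
  define c where "c \<theta> = t1 + of_real \<rho> * cis \<theta>" for \<theta>
  have c_ball: "c \<theta> \<in> ball 0 1" for \<theta>
    using norm_triangle_ineq[of t1 "of_real \<rho> * cis \<theta>"] \<rho> by (simp add: c_def norm_mult)
  define w where "w \<theta> = \<alpha> * of_real \<rho> * cis \<theta>" for \<theta>
  have w: "w \<theta> \<noteq> 0" for \<theta> using \<rho> \<alpha>0 by (simp add: w_def)
  define E where "E \<theta> = P (Suc n) s (\<phi> (c \<theta>)) / of_real (\<epsilon> (Suc n))" for \<theta>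
  define x where "x \<theta> = (F (c \<theta>) - a (Suc n) + E \<theta> - w \<theta>) / w \<theta>" for \<theta>
  have x: "cmod (x \<theta>) < 1" for \<theta>
  proof -
    have "cmod (E \<theta>) < r (Suc n) / 2"
      using branch_square(2)[of "\<phi> (c \<theta>)" n s] s c_ball[of \<theta>] by (simp add: E_def)
    moreover have "0 < cmod \<alpha> * \<rho>" using \<alpha>0 \<rho> by simp
    ultimately have E: "cmod (E \<theta>) \<le> cmod \<alpha> * \<rho> / 2" using small(1) by argo
    have b: "cmod (F t1 - a (Suc n)) < cmod \<alpha> * \<rho> / 10" using small(2) by (simp add: norm_minus_commute)
    show ?thesis unfolding x_def w_def c_def by (rule circle_relative_error[OF lin \<rho>(1,2) \<alpha>0 b E])
  qed
  define u where "u \<theta> = P n s (\<phi> (c \<theta>)) - s (Suc n)" for \<theta>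
  have sq: "u \<theta> ^ 2 = of_real (\<epsilon> (Suc n)) * w \<theta> * (1 + x \<theta>)" for \<theta>
  proof -
    have "u \<theta> ^ 2 = of_real (\<epsilon> (Suc n)) * (F (c \<theta>) - a (Suc n) + E \<theta>)"
      using branch_square(1)[of "\<phi> (c \<theta>)" n s] s c_ball[of \<theta>] Aeq by (auto simp: u_def E_def)
    moreover have "w \<theta> * (1 + x \<theta>) = F (c \<theta>) - a (Suc n) + E \<theta>" using w[of \<theta>] by (simp add: x_def field_simps)
    ultimately show ?thesis by (metis mult.assoc)
  qed
  have cu: "continuous_on UNIV u" unfolding u_def
    by (intro continuous_intros continuous_on_compose2[OF cont_P continuous_on_compose2[OF c\<phi>]])
       (use c_ball in \<open>auto simp: c_def intro!: continuous_intros\<close>)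
  have per: "u (2 * pi) = u 0" by (simp add: u_def c_def)
  have antipodal: "of_real (\<epsilon> (Suc n)) * w (\<theta> + pi) = - (of_real (\<epsilon> (Suc n)) * w \<theta>)" for \<theta>
    by (simp add: w_def cis_def complex_eq_iff algebra_simps)
  have nonzero: "of_real (\<epsilon> (Suc n)) * w \<theta> \<noteq> 0" for \<theta> using w eps_pos[of n] by simp
  show False by (rule no_continuous_sqrt_winding[OF cu per sq antipodal nonzero x])
qed

text \<open>Suppose a disk (f, g) in X and a function F with
  A_k(f, g) = F - a_k for all k in an index set along which a_k accumulates at F(t1), where
  F'(t1) = \<alpha> \<noteq> 0.  Choose a circle around t1 on which F is close to its tangent map and an
  index k with r_k and |a_k - F(t1)| small compared with its radius; the disk lies in a single
  branch of level k, and the circle argument applies.\<close>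
lemma no_disk_moving_A:
  fixes f g F :: "complex \<Rightarrow> complex" and KS :: "nat set"
  assumes fc: "continuous_on (ball 0 1) f" "continuous_on (ball 0 1) g"
    and inX: "\<forall>t\<in>ball 0 1. (f t, g t) \<in> Xlim a r m"
    and t1: "t1 \<in> ball 0 1" and dF: "(F has_field_derivative \<alpha>) (at t1)" and \<alpha>0: "\<alpha> \<noteq> 0"
    and Aeq: "\<And>k t. k \<in> KS \<Longrightarrow> Afun a k (f t, g t) = F t - a k"
    and KS1: "\<And>k. k \<in> KS \<Longrightarrow> k \<ge> 1"
    and a_dense: "\<And>\<eta> N. \<eta> > 0 \<Longrightarrow> \<exists>k\<in>KS. k \<ge> N \<and> cmod (a k - F t1) < \<eta>"
    and r_lim: "r \<longlonglongrightarrow> 0"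
  shows False
proof -
  have A: "cmod \<alpha> / 10 > 0" using \<alpha>0 by simp
  obtain d where d: "d > 0" "\<And>y. dist y t1 < d \<Longrightarrow> cmod (F y - F t1 - \<alpha> * (y - t1)) \<le> cmod \<alpha> / 10 * cmod (y - t1)"
    using field_deriv_linear_bound[OF dF A] by blast
  have "cmod t1 < 1" using t1 by simp
  define \<rho> where "\<rho> = min d (1 - cmod t1) / 2"
  have \<rho>: "\<rho> > 0" "\<rho> < d" "cmod t1 + \<rho> < 1"
    using d(1) \<open>cmod t1 < 1\<close> by (auto simp: \<rho>_def min_def field_simps)
  have "cmod \<alpha> * \<rho> / 10 > 0" using \<alpha>0 \<rho> by simp
  note good_index[OF r_lim a_dense KS1 this]
  then obtain n where "Suc n \<in> KS \<and> r (Suc n) < cmod \<alpha> * \<rho> / 10 \<and> cmod (a (Suc n) - F t1) < cmod \<alpha> * \<rho> / 10" ..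
  then have k: "Suc n \<in> KS" "r (Suc n) < cmod \<alpha> * \<rho> / 10" "cmod (a (Suc n) - F t1) < cmod \<alpha> * \<rho> / 10"
    by auto
  have c\<phi>: "continuous_on (ball 0 1) (\<lambda>t. (f t, g t))" by (intro continuous_on_Pair fc)
  obtain s where s: "s \<in> S_set r m (Suc n)" "\<forall>t\<in>ball 0 1. (f t, g t) \<in> Xns a r m (Suc n) s"
    using disk_branch[OF c\<phi>] inX by (force simp: Xlim_def)
  show False by (rule branch_circle_contradiction[OF c\<phi> s(2) Aeq[OF k(1)] d(2) \<rho> \<alpha>0 k(2,3)])
qed

lemma disk_deriv_vanishes:
  fixes f g F :: "complex \<Rightarrow> complex" and h :: "nat \<Rightarrow> nat"
  assumes fc: "continuous_on (ball 0 1) f" "continuous_on (ball 0 1) g"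
    and inX: "\<forall>t\<in>ball 0 1. (f t, g t) \<in> Xlim a r m"
    and F: "F holomorphic_on ball 0 1" "\<forall>t\<in>ball 0 1. cmod (F t) < 1/4"
    and h: "\<And>p. Q p \<Longrightarrow> h p \<ge> 1" "\<And>p t. Q p \<Longrightarrow> Afun a (h p) (f t, g t) = F t - a (h p)"
    and dense: "ball 0 (1/4) \<subseteq> closure {a (h p) | p. Q p}" and r_lim: "r \<longlonglongrightarrow> 0"
  shows "\<forall>t\<in>ball 0 1. deriv F t = 0"
proof (rule ccontr)
  assume "\<not> ?thesis"
  then obtain t1 where t1: "t1 \<in> ball 0 1" "deriv F t1 \<noteq> 0" by blast
  have dF: "(F has_field_derivative deriv F t1) (at t1)" by (rule holomorphic_derivI[OF F(1) open_ball t1(1)])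
  show False
  proof (rule no_disk_moving_A[OF fc inX t1(1) dF t1(2), of "h ` {p. Q p}"])
    show "\<And>k t. k \<in> h ` {p. Q p} \<Longrightarrow> Afun a k (f t, g t) = F t - a k"
      "\<And>k. k \<in> h ` {p. Q p} \<Longrightarrow> 1 \<le> k" using h by auto
    show "\<exists>k\<in>h ` {p. Q p}. N \<le> k \<and> cmod (a k - F t1) < \<eta>" if "\<eta> > 0" for \<eta> N
      using dense_index[where a=a and h=h and Q=Q, OF dense _ that, of "F t1" N] F(2) t1(1) by blast
  qed (rule r_lim)
qed

lemma deriv_zero_constant:
  assumes "F holomorphic_on ball 0 1" "\<forall>t\<in>ball 0 1. deriv F t = 0"
  shows "\<exists>c. \<forall>t\<in>ball (0::complex) 1. F t = c"
proof (rule has_field_derivative_zero_constant[OF convex_ball])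
  fix t :: complex assume t: "t \<in> ball 0 1"
  show "(F has_field_derivative 0) (at t within ball 0 1)"
    using holomorphic_derivI[OF assms(1) open_ball t] assms(2) t by simp
qed

text \<open>No holomorphic disk over D(0,1/5): applying the previous lemma to z (odd indices) and to
  z + w/100 (even indices), both coordinates of a disk would be constant.\<close>
theorem no_holo_disk:
  assumes a_even_dense: "ball 0 (1/4) \<subseteq> closure {a (2 * p) | p. p \<ge> 1}"
    and a_odd_dense: "ball 0 (1/4) \<subseteq> closure {a (2 * p + 1) | p. True}"
    and r_lim: "r \<longlonglongrightarrow> 0"
  shows "\<not> contains_holo_disk (Xlim a r m \<inter> {(z, w). norm z < 1/5 \<and> norm w < 1})"
proof
  assume "contains_holo_disk (Xlim a r m \<inter> {(z, w). norm z < 1/5 \<and> norm w < 1})"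
  then obtain f g where hf: "f holomorphic_on ball 0 1" and hg: "g holomorphic_on ball 0 1"
    and inY: "\<forall>t\<in>ball 0 1. (f t, g t) \<in> Xlim a r m \<inter> {(z, w). norm z < 1/5 \<and> norm w < 1}"
    and nc: "\<exists>t1\<in>ball 0 1. \<exists>t2\<in>ball 0 1. (f t1, g t1) \<noteq> (f t2, g t2)"
    unfolding contains_holo_disk_def by blast
  have inX: "\<forall>t\<in>ball 0 1. (f t, g t) \<in> Xlim a r m" using inY by blast
  have fb: "cmod (f t) < 1/5" "cmod (g t) < 1" if "t \<in> ball 0 1" for t using inY that by auto
  have fc: "continuous_on (ball 0 1) f" "continuous_on (ball 0 1) g"
    using hf hg by (auto intro: holomorphic_on_imp_continuous_on)
  define F where "F t = f t + g t / 100" for t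
  have hF: "F holomorphic_on ball 0 1" unfolding F_def using hf hg by (intro holomorphic_intros) auto
  have "\<forall>t\<in>ball 0 1. cmod (F t) < 1/4"
  proof
    fix t :: complex assume t: "t \<in> ball 0 1"
    have "cmod (F t) \<le> cmod (f t) + cmod (g t / 100)" unfolding F_def by (rule norm_triangle_ineq)
    then show "cmod (F t) < 1/4" using fb[OF t] by (simp add: norm_divide)
  qed
  then have "\<forall>t\<in>ball 0 1. deriv F t = 0"
    by (intro disk_deriv_vanishes[OF fc inX hF _ _ _ a_even_dense r_lim]) (auto simp: Afun_def F_def)
  then obtain c2 where c2: "\<forall>t\<in>ball 0 1. F t = c2" using deriv_zero_constant[OF hF] by blast
  have "\<forall>t\<in>ball 0 1. cmod (f t) < 1/4"
  proof
    fix t :: complex assume "t \<in> ball 0 1"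
    then show "cmod (f t) < 1/4" using fb(1) by fastforce
  qed
  then have "\<forall>t\<in>ball 0 1. deriv f t = 0"
    by (intro disk_deriv_vanishes[OF fc inX hf _ _ _ a_odd_dense r_lim]) (auto simp: Afun_def)
  then obtain c1 where c1: "\<forall>t\<in>ball 0 1. f t = c1" using deriv_zero_constant[OF hf] by blast
  have "g t = 100 * (c2 - c1)" if "t \<in> ball 0 1" for t
    using c1 c2 that by (auto simp: F_def field_simps)
  then show False using nc c1 by auto
qed

end

theorem proposition1:
  fixes a :: "nat \<Rightarrow> complex" and r :: "nat \<Rightarrow> real" and m :: "nat \<Rightarrow> nat"
  assumes a_in: "\<And>n. n \<ge> 1 \<Longrightarrow> a n \<in> ball 0 (1/4)"
    and a_even_dense: "ball 0 (1/4) \<subseteq> closure {a (2 * p) | p. p \<ge> 1}"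
    and a_odd_dense: "ball 0 (1/4) \<subseteq> closure {a (2 * p + 1) | p. True}"
    and r_pos: "\<And>n. n \<ge> 1 \<Longrightarrow> r n > 0"
    and r_le: "\<And>n. n \<ge> 1 \<Longrightarrow> r n \<le> 1/10"
    and r_decr: "\<And>n. n \<ge> 1 \<Longrightarrow> r (Suc n) \<le> r n"
    and r_lim: "r \<longlonglongrightarrow> 0"
    and m_pos: "\<And>n. n \<ge> 1 \<Longrightarrow> m n > 0"
  shows "poly_convex (Xlim a r m) \<and> horizontal (Xlim a r m) \<and>
         \<not> contains_holo_disk (Xlim a r m \<inter> {(z, w). norm z < 1/5 \<and> norm w < 1})"
proof -
  interpret construction a r m by unfold_locales (use a_in r_pos r_le m_pos in auto)
  show ?thesis using poly_convex_Xlim horizontal_Xlim no_holo_disk[OF a_even_dense a_odd_dense r_lim] by blast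
qed

end
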